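(* Let $n\ge2$. Suppose there is an algorithm which, given $g,h\in H_n\rtimes S_n$, decides whether there exists $x\in H_n^*(g)$ with $x^{-1}gx=h$. Then there is an algorithm which, given $g,h\in H_n\rtimes S_n$, decides whether there exists $x\in H_n$ with $x^{-1}gx=h$.
   Context: $\mathbb{N}=\{1,2,\dots\}$, $X_n=\{1,\dots,n\}\times\mathbb{N}$, permutations act on the right. $H_n$ is the group of bijections $g$ of $X_n$ with $z_i(g)\in\mathbb{N}$, $t_i(g)\in\mathbb{Z}$ such that $(i,m)g=(i,m+t_i(g))$ for all $m\ge z_i(g)$. $S_n$ acts by $(i,m)\sigma=(i\sigma,m)$; $H_n\rtimes S_n\le\mathrm{Sym}(X_n)$ is generated by $H_n$ and these (elements given as words in a finite generating set); each $g$ is uniquely $\omega_g\sigma_g$ with $\omega_g\in H_n$, $\sigma_g\in S_n$, $t_i(g):=t_i(\omega_g)$. $[i]_g$ is the orbit of $i$ under $\langle\sigma_g\rangle$, $t_{[i]}(g)=\sum_{k\in[i]_g}t_k(g)$, $I(g)=\{i:t_{[i]}(g)\ne0\}$. With $|\sigma_g|$ the order of $\sigma_g$, $H_n^*(g)=\{x\in H_n: t_i(x)\equiv0\bmod\big||\sigma_g|\,t_{[i]}(g)\big| \text{ for all } i\in I(g)\}$. *)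

theory Defs
  imports "HOL-Library.Nat_Bijection" "HOL-Combinatorics.Permutations"
begin

datatype recf = Zero | Succ | Proj nat | Cn recf "recf list" | Pr recf recf | Mn recf

inductive reval :: "recf \<Rightarrow> nat list \<Rightarrow> nat \<Rightarrow> bool" where
  zero: "reval Zero xs 0"
| succ: "reval Succ (x # xs) (Suc x)"
| proj: "i < length xs \<Longrightarrow> reval (Proj i) xs (xs ! i)"
| cn: "list_all2 (\<lambda>g y. reval g xs y) gs ys \<Longrightarrow> reval f ys z \<Longrightarrow> reval (Cn f gs) xs z"
| pr0: "reval f xs y \<Longrightarrow> reval (Pr f g) (0 # xs) y"
| prS: "reval (Pr f g) (k # xs) y \<Longrightarrow> reval g (k # y # xs) z \<Longrightarrow> reval (Pr f g) (Suc k # xs) z"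
| mn: "reval f (k # xs) 0 \<Longrightarrow> (\<forall>m<k. \<exists>y>0. reval f (m # xs) y) \<Longrightarrow> reval (Mn f) xs k"

definition decidable_set :: "nat set \<Rightarrow> bool" where
  "decidable_set A \<longleftrightarrow> (\<exists>f. \<forall>x. reval f [x] (if x \<in> A then 1 else 0))"

text \<open>A letter (k, b) stands for the k-th generator (b = False) or its inverse (b = True).\<close>
type_synonym letter = "nat \<times> bool"

definition enc_word :: "letter list \<Rightarrow> nat" where
  "enc_word w = list_encode (map (\<lambda>(k, b). 2 * k + (if b then 1 else 0)) w)"

definition decidable_pairs :: "(letter list \<Rightarrow> letter list \<Rightarrow> bool) \<Rightarrow> bool" where
  "decidable_pairs P \<longleftrightarrow>
     decidable_set {prod_encode (enc_word w1, enc_word w2) | w1 w2. P w1 w2}"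

type_synonym pt = "nat \<times> nat"
type_synonym perm = "pt \<Rightarrow> pt"

text \<open>Permutations act on the right: the product g h is "first g, then h".\<close>
definition Xn :: "nat \<Rightarrow> pt set" where
  "Xn n = {1..n} \<times> {1..}"

definition SymX :: "nat \<Rightarrow> perm set" where
  "SymX n = {g. bij_betw g (Xn n) (Xn n) \<and> (\<forall>p. p \<notin> Xn n \<longrightarrow> g p = p)}"

definition gmul :: "perm \<Rightarrow> perm \<Rightarrow> perm" where
  "gmul g h = h \<circ> g"

definition ginv :: "nat \<Rightarrow> perm \<Rightarrow> perm" where
  "ginv n g = (\<lambda>p. if p \<in> Xn n then inv_into (Xn n) g p else p)"

definition Hn :: "nat \<Rightarrow> perm set" where
  "Hn n = {g \<in> SymX n. \<exists>z :: nat \<Rightarrow> nat. \<exists>t :: nat \<Rightarrow> int.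
             \<forall>i \<in> {1..n}. \<forall>m. 1 \<le> m \<and> z i \<le> m \<longrightarrow> g (i, m) = (i, nat (int m + t i))}"

definition tH :: "perm \<Rightarrow> nat \<Rightarrow> int" where
  "tH g i = (THE t. \<exists>z. \<forall>m. 1 \<le> m \<and> z \<le> m \<longrightarrow> g (i, m) = (i, nat (int m + t)))"

definition sact :: "nat \<Rightarrow> (nat \<Rightarrow> nat) \<Rightarrow> perm" where
  "sact n \<sigma> = (\<lambda>p. if p \<in> Xn n then (\<sigma> (fst p), snd p) else p)"

text \<open>H_n \<rtimes> S_n = { omega sigma : omega in H_n, sigma in S_n }
  (the subgroup of Sym(X_n) generated by H_n and S_n, as H_n is normalised by S_n).\<close>
definition Gn :: "nat \<Rightarrow> perm set" where
  "Gn n = {gmul \<omega> (sact n \<sigma>) | \<omega> \<sigma>. \<omega> \<in> Hn n \<and> \<sigma> permutes {1..n}}"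

definition sigma_of :: "nat \<Rightarrow> perm \<Rightarrow> (nat \<Rightarrow> nat)" where
  "sigma_of n g = (THE \<sigma>. \<sigma> permutes {1..n} \<and> (\<exists>\<omega> \<in> Hn n. g = gmul \<omega> (sact n \<sigma>)))"

definition omega_of :: "nat \<Rightarrow> perm \<Rightarrow> perm" where
  "omega_of n g = (THE \<omega>. \<omega> \<in> Hn n \<and> g = gmul \<omega> (sact n (sigma_of n g)))"

definition tG :: "nat \<Rightarrow> perm \<Rightarrow> nat \<Rightarrow> int" where
  "tG n g i = tH (omega_of n g) i"

definition orb :: "nat \<Rightarrow> perm \<Rightarrow> nat \<Rightarrow> nat set" where
  "orb n g i = {(sigma_of n g ^^ k) i | k. True}"

definition t_orb :: "nat \<Rightarrow> perm \<Rightarrow> nat \<Rightarrow> int" where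
  "t_orb n g i = (\<Sum>k \<in> orb n g i. tG n g k)"

definition Iset :: "nat \<Rightarrow> perm \<Rightarrow> nat set" where
  "Iset n g = {i \<in> {1..n}. t_orb n g i \<noteq> 0}"

definition perm_order :: "(nat \<Rightarrow> nat) \<Rightarrow> nat" where
  "perm_order \<sigma> = (LEAST k. 0 < k \<and> \<sigma> ^^ k = id)"

definition Hstar :: "nat \<Rightarrow> perm \<Rightarrow> perm set" where
  "Hstar n g = {x \<in> Hn n. \<forall>i \<in> Iset n g.
      \<bar>int (perm_order (sigma_of n g)) * t_orb n g i\<bar> dvd tH x i}"

definition valid_word :: "perm list \<Rightarrow> letter list \<Rightarrow> bool" where
  "valid_word gens w \<longleftrightarrow> (\<forall>(k, b) \<in> set w. k < length gens)"

definition word_eval :: "nat \<Rightarrow> perm list \<Rightarrow> letter list \<Rightarrow> perm" where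
  "word_eval n gens w =
     foldl (\<lambda>acc (k, b). gmul acc (if b then ginv n (gens ! k) else gens ! k)) id w"

definition generating_list :: "nat \<Rightarrow> perm list \<Rightarrow> bool" where
  "generating_list n gens \<longleftrightarrow> set gens \<subseteq> Gn n \<and>
     (\<forall>g \<in> Gn n. \<exists>w. valid_word gens w \<and> word_eval n gens w = g)"

end

theory Submission
  imports Defs "HOL-Combinatorics.Cycles"
begin

(* Let y_j (2 <= j <= n) translate ray 1 up and ray j down, and let M > 0 be such that every
   y_j^M lies in H_n*(g); such M exist as the moduli |sigma_g| t_[i](g), i in I(g), are nonzero. Suppose g is conjugate
   to h by z in H_n. Write t_j(z) = a_j - M k_j with 0 <= a_j < M and let Y be the product of the
   y_j^a_j. If c_j in H_n*(g) conjugates g to its y_j^M-conjugate, then e_j = y_j^-M c_j centralises g,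
   and x = Y z (product of the e_j^k_j) conjugates g to Y h Y^-1. Since the translation lengths
   of z sum to 0, t(z) + sum_j t_j(z) t(y_j) = 0, which leaves t(x) = sum_j k_j t(c_j), so x lies
   in H_n*(g). Hence g ~ h in H_n iff g ~ Y h Y^-1 in H_n*(g) for one of the M^(n-1) products Y.
   A suitable M is found by unbounded search with the H_n*-oracle, and then the M^(n-1)
   candidates are tested with it. *)

section \<open>Total recursive functions\<close>

definition computable :: "nat \<Rightarrow> (nat list \<Rightarrow> nat) \<Rightarrow> bool" where
  "computable k f \<longleftrightarrow> (\<exists>F. \<forall>xs. length xs = k \<longrightarrow> reval F xs (f xs))"

lemma computable_cong: "computable k f \<Longrightarrow> (\<And>xs. length xs = k \<Longrightarrow> f xs = g xs) \<Longrightarrow> computable k g"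
  unfolding computable_def by metis

lemma computable_proj: "i < k \<Longrightarrow> computable k (\<lambda>xs. xs ! i)"
  unfolding computable_def by (auto intro!: exI[of _ "Proj i"] reval.proj)

lemma computable_nth0: "computable (Suc k) (\<lambda>xs. xs ! 0)" by (rule computable_proj) simp
lemma computable_nth1: "computable (Suc (Suc k)) (\<lambda>xs. xs ! 1)" by (rule computable_proj) simp
lemma computable_nth2: "computable (Suc (Suc (Suc k))) (\<lambda>xs. xs ! 2)" by (rule computable_proj) simp
lemma computable_nth3: "computable (Suc (Suc (Suc (Suc k)))) (\<lambda>xs. xs ! 3)" by (rule computable_proj) simp

lemma computable_zero: "computable k (\<lambda>_. 0)"
  unfolding computable_def by (auto intro!: exI[of _ Zero] reval.zero)

lemma computable_tuple: "\<forall>g\<in>set gs. computable k g \<Longrightarrow>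
  \<exists>Gs. length Gs = length gs \<and>
    (\<forall>xs. length xs = k \<longrightarrow> list_all2 (\<lambda>G y. reval G xs y) Gs (map (\<lambda>g. g xs) gs))"
proof (induction gs)
  case (Cons g gs)
  then obtain Gs where "length Gs = length gs"
    and "\<forall>xs. length xs = k \<longrightarrow> list_all2 (\<lambda>G y. reval G xs y) Gs (map (\<lambda>g. g xs) gs)" by auto
  moreover obtain G where "\<forall>xs. length xs = k \<longrightarrow> reval G xs (g xs)"
    using Cons.prems unfolding computable_def by auto
  ultimately show ?case by (intro exI[of _ "G # Gs"]) auto
qed simp

lemma computable_comp: "computable m f \<Longrightarrow> length gs = m \<Longrightarrow> \<forall>g\<in>set gs. computable k g \<Longrightarrow>
   computable k (\<lambda>xs. f (map (\<lambda>g. g xs) gs))"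
proof -
  assume f: "computable m f" and len: "length gs = m" and gs: "\<forall>g\<in>set gs. computable k g"
  from f obtain F where "\<forall>xs. length xs = m \<longrightarrow> reval F xs (f xs)" unfolding computable_def by auto
  moreover from computable_tuple[OF gs] obtain Gs where "length Gs = length gs"
    and "\<forall>xs. length xs = k \<longrightarrow> list_all2 (\<lambda>G y. reval G xs y) Gs (map (\<lambda>g. g xs) gs)" by auto
  ultimately show ?thesis unfolding computable_def
    by (intro exI[of _ "Cn F Gs"]) (use len in \<open>auto intro!: reval.cn\<close>)
qed

lemma computable_comp1: "computable (Suc 0) f \<Longrightarrow> computable k g \<Longrightarrow> computable k (\<lambda>xs. f [g xs])"
  using computable_comp[of "Suc 0" f "[g]" k] by simp

lemma computable_comp2: "computable (Suc (Suc 0)) f \<Longrightarrow> computable k g \<Longrightarrow> computable k h \<Longrightarrow>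
   computable k (\<lambda>xs. f [g xs, h xs])"
  using computable_comp[of "Suc (Suc 0)" f "[g, h]" k] by simp

lemma computable_comp3: "computable (Suc (Suc (Suc 0))) f \<Longrightarrow> computable k g \<Longrightarrow> computable k h \<Longrightarrow>
   computable k u \<Longrightarrow> computable k (\<lambda>xs. f [g xs, h xs, u xs])"
  using computable_comp[of "Suc (Suc (Suc 0))" f "[g, h, u]" k] by simp

lemma computable_reindex:
  assumes "computable (length idx) f" and "\<forall>i\<in>set idx. i < k"
  shows "computable k (\<lambda>xs. f (map ((!) xs) idx))"
proof -
  have "computable k (\<lambda>xs. f (map (\<lambda>g. g xs) (map (\<lambda>i xs. xs ! i) idx)))"
    using assms by (intro computable_comp) (auto intro: computable_proj)
  then show ?thesis by (simp add: comp_def)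
qed

lemma map_nth_upt_length: "map ((!) xs) [k..<length xs] = drop k xs"
  by (rule nth_equalityI) auto

lemma computable_tl: "computable k f \<Longrightarrow> computable (Suc k) (\<lambda>xs. f (tl xs))"
proof -
  assume "computable k f"
  then have "computable (Suc k) (\<lambda>xs. f (map ((!) xs) [Suc 0..<Suc k]))"
    by (intro computable_reindex) (simp_all del: upt_Suc)
  then show ?thesis
  proof (rule computable_cong)
    fix xs :: "nat list" assume "length xs = Suc k"
    then show "f (map ((!) xs) [Suc 0..<Suc k]) = f (tl xs)"
      using map_nth_upt_length[of xs "Suc 0"] by (simp add: drop_Suc del: upt_Suc)
  qed
qed

lemma computable_Suc: "computable k f \<Longrightarrow> computable k (\<lambda>xs. Suc (f xs))"
proof -
  have "computable (Suc 0) (\<lambda>xs. Suc (xs ! 0))" unfolding computable_def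
    by (rule exI[of _ Succ]) (auto simp: length_Suc_conv intro: reval.succ)
  then show "computable k f \<Longrightarrow> ?thesis" using computable_comp1 by fastforce
qed

lemma computable_const: "computable k (\<lambda>_. c)"
  by (induction c) (auto intro: computable_zero computable_Suc)

primrec prim_rec :: "(nat list \<Rightarrow> nat) \<Rightarrow> (nat list \<Rightarrow> nat) \<Rightarrow> nat \<Rightarrow> nat list \<Rightarrow> nat" where
  "prim_rec f g 0 ys = f ys"
| "prim_rec f g (Suc n) ys = g (n # prim_rec f g n ys # ys)"

lemma computable_prim_rec: "computable k f \<Longrightarrow> computable (Suc (Suc k)) g \<Longrightarrow>
   computable (Suc k) (\<lambda>xs. prim_rec f g (hd xs) (tl xs))"
proof -
  assume "computable k f" "computable (Suc (Suc k)) g"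
  then obtain F G where F: "\<forall>xs. length xs = k \<longrightarrow> reval F xs (f xs)"
    and G: "\<forall>xs. length xs = Suc (Suc k) \<longrightarrow> reval G xs (g xs)" unfolding computable_def by auto
  have "reval (Pr F G) (n # ys) (prim_rec f g n ys)" if "length ys = k" for n ys
    by (induction n) (use F G that in \<open>auto intro: reval.pr0 reval.prS\<close>)
  then show ?thesis unfolding computable_def
    by (intro exI[of _ "Pr F G"]) (auto simp: length_Suc_conv)
qed

lemma computable_Least: "computable (Suc k) f \<Longrightarrow> (\<And>xs. length xs = k \<Longrightarrow> \<exists>m. f (m # xs) = 0) \<Longrightarrow>
   computable k (\<lambda>xs. LEAST m. f (m # xs) = 0)"
proof -
  assume "computable (Suc k) f" and ex: "\<And>xs. length xs = k \<Longrightarrow> \<exists>m. f (m # xs) = 0"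
  then obtain F where F: "\<forall>xs. length xs = Suc k \<longrightarrow> reval F xs (f xs)" unfolding computable_def by auto
  show ?thesis unfolding computable_def
  proof (intro exI[of _ "Mn F"] allI impI)
    fix xs :: "nat list" assume len: "length xs = k"
    let ?m = "LEAST m. f (m # xs) = 0"
    have "\<forall>m<?m. \<exists>y>0. reval F (m # xs) y"
      using F len not_less_Least[of _ "\<lambda>m. f (m # xs) = 0"] by (metis length_Cons neq0_conv)
    moreover have "reval F (?m # xs) 0"
      using F len LeastI_ex[OF ex[OF len]] by (metis length_Cons)
    ultimately show "reval (Mn F) xs ?m" by (rule reval.mn[rotated])
  qed
qed

lemma computable_add: "computable k f \<Longrightarrow> computable k g \<Longrightarrow> computable k (\<lambda>xs. f xs + g xs)"
proof -
  have "computable (Suc (Suc 0)) (\<lambda>xs. prim_rec (\<lambda>ys. ys ! 0) (\<lambda>ys. Suc (ys ! 1)) (hd xs) (tl xs))"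
    by (rule computable_prim_rec[OF computable_nth0 computable_Suc[OF computable_nth1]])
  moreover have "prim_rec (\<lambda>ys. ys ! 0) (\<lambda>ys. Suc (ys ! 1)) n ys = n + ys ! 0" for n ys
    by (induction n) auto
  ultimately have "computable (Suc (Suc 0)) (\<lambda>xs. xs ! 0 + xs ! 1)"
    by (auto elim!: computable_cong simp: length_Suc_conv)
  then show "computable k f \<Longrightarrow> computable k g \<Longrightarrow> ?thesis" using computable_comp2 by fastforce
qed

lemma computable_mult: "computable k f \<Longrightarrow> computable k g \<Longrightarrow> computable k (\<lambda>xs. f xs * g xs)"
proof -
  have "computable (Suc (Suc 0)) (\<lambda>xs. prim_rec (\<lambda>_. 0) (\<lambda>ys. ys ! 1 + ys ! 2) (hd xs) (tl xs))"
    by (rule computable_prim_rec[OF computable_zero computable_add[OF computable_nth1 computable_nth2]])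
  moreover have "prim_rec (\<lambda>_. 0) (\<lambda>ys. ys ! 1 + ys ! 2) n ys = n * ys ! 0" for n ys
    by (induction n) auto
  ultimately have "computable (Suc (Suc 0)) (\<lambda>xs. xs ! 0 * xs ! 1)"
    by (auto elim!: computable_cong simp: length_Suc_conv)
  then show "computable k f \<Longrightarrow> computable k g \<Longrightarrow> ?thesis" using computable_comp2 by fastforce
qed

lemma computable_minus_one: "computable k f \<Longrightarrow> computable k (\<lambda>xs. f xs - 1)"
proof -
  have "computable (Suc 0) (\<lambda>xs. prim_rec (\<lambda>_. 0) (\<lambda>ys. ys ! 0) (hd xs) (tl xs))"
    by (rule computable_prim_rec[OF computable_zero computable_nth0])
  moreover have "prim_rec (\<lambda>_. 0) (\<lambda>ys. ys ! 0) n ys = n - 1" for n ys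
    by (induction n) auto
  ultimately have "computable (Suc 0) (\<lambda>xs. xs ! 0 - 1)"
    by (auto elim!: computable_cong simp: length_Suc_conv)
  then show "computable k f \<Longrightarrow> ?thesis" using computable_comp1 by fastforce
qed

lemma computable_diff: "computable k f \<Longrightarrow> computable k g \<Longrightarrow> computable k (\<lambda>xs. f xs - g xs)"
proof -
  have "computable (Suc (Suc 0)) (\<lambda>xs. prim_rec (\<lambda>ys. ys ! 0) (\<lambda>ys. ys ! 1 - 1) (hd xs) (tl xs))"
    by (rule computable_prim_rec[OF computable_nth0 computable_minus_one[OF computable_nth1]])
  moreover have "prim_rec (\<lambda>ys. ys ! 0) (\<lambda>ys. ys ! 1 - 1) n ys = ys ! 0 - n" for n ys
    by (induction n) auto
  ultimately have "computable (Suc (Suc 0)) (\<lambda>xs. xs ! 1 - xs ! 0)"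
    by (auto elim!: computable_cong simp: length_Suc_conv)
  then show "computable k f \<Longrightarrow> computable k g \<Longrightarrow> ?thesis"
    using computable_comp2[of "\<lambda>xs. xs ! 1 - xs ! 0" k g f] by simp
qed

lemma computable_power: "computable k f \<Longrightarrow> computable k g \<Longrightarrow> computable k (\<lambda>xs. f xs ^ g xs)"
proof -
  have "computable (Suc (Suc 0)) (\<lambda>xs. prim_rec (\<lambda>_. 1) (\<lambda>ys. ys ! 1 * ys ! 2) (hd xs) (tl xs))"
    by (rule computable_prim_rec[OF computable_const computable_mult[OF computable_nth1 computable_nth2]])
  moreover have "prim_rec (\<lambda>_. 1) (\<lambda>ys. ys ! 1 * ys ! 2) n ys = ys ! 0 ^ n" for n ys
    by (induction n) auto
  ultimately have "computable (Suc (Suc 0)) (\<lambda>xs. xs ! 1 ^ xs ! 0)"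
    by (auto elim!: computable_cong simp: length_Suc_conv)
  then show "computable k f \<Longrightarrow> computable k g \<Longrightarrow> ?thesis"
    using computable_comp2[of "\<lambda>xs. xs ! 1 ^ xs ! 0" k g f] by simp
qed

lemma computable_if_zero: "computable k c \<Longrightarrow> computable k f \<Longrightarrow> computable k g \<Longrightarrow>
   computable k (\<lambda>xs. if c xs = 0 then f xs else g xs)"
proof -
  assume "computable k c" "computable k f" "computable k g"
  then have "computable k (\<lambda>xs. f xs * (1 - c xs) + g xs * (1 - (1 - c xs)))"
    by (intro computable_add computable_mult computable_diff computable_const)
  then show ?thesis by (rule computable_cong) auto
qed

lemma computable_funpow: "computable (Suc k) step \<Longrightarrow> computable k init \<Longrightarrow>
  computable (Suc k) (\<lambda>xs. ((\<lambda>a. step (a # tl xs)) ^^ (hd xs)) (init (tl xs)))"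
proof -
  assume step: "computable (Suc k) step" and init: "computable k init"
  have "computable (Suc (Suc k)) (\<lambda>xs. step (map ((!) xs) (Suc 0 # [2..<Suc (Suc k)])))"
    by (rule computable_reindex) (use step in \<open>auto simp del: upt_Suc\<close>)
  then have "computable (Suc (Suc k)) (\<lambda>ys. step (ys ! 1 # tl (tl ys)))"
  proof (rule computable_cong)
    fix xs :: "nat list" assume "length xs = Suc (Suc k)"
    then show "step (map ((!) xs) (Suc 0 # [2..<Suc (Suc k)])) = step (xs ! 1 # tl (tl xs))"
      using map_nth_upt_length[of xs 2] by (simp add: numeral_2_eq_2 drop_Suc del: upt_Suc)
  qed
  then have "computable (Suc k) (\<lambda>xs. prim_rec init (\<lambda>ys. step (ys ! 1 # tl (tl ys))) (hd xs) (tl xs))"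
    by (rule computable_prim_rec[OF init])
  moreover have "prim_rec init (\<lambda>ys. step (ys ! 1 # tl (tl ys))) n ps = ((\<lambda>a. step (a # ps)) ^^ n) (init ps)"
    for n ps by (induction n) auto
  ultimately show ?thesis by simp
qed

definition decidable_pred :: "nat \<Rightarrow> (nat list \<Rightarrow> bool) \<Rightarrow> bool" where
  "decidable_pred k P \<longleftrightarrow> computable k (\<lambda>xs. if P xs then 1 else 0)"

lemma decidable_pred_const: "decidable_pred k (\<lambda>_. b)"
  unfolding decidable_pred_def by (rule computable_const)

lemma decidable_pred_le: "computable k f \<Longrightarrow> computable k g \<Longrightarrow> decidable_pred k (\<lambda>xs. f xs \<le> g xs)"
  unfolding decidable_pred_def
  by (drule (1) computable_diff) (erule computable_cong[OF computable_if_zero[OF _ computable_const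
        computable_const]], simp)

lemma decidable_pred_not: "decidable_pred k P \<Longrightarrow> decidable_pred k (\<lambda>xs. \<not> P xs)"
  unfolding decidable_pred_def
  by (drule computable_diff[OF computable_const[of k 1]]) (erule computable_cong, simp)

lemma decidable_pred_conj:
  "decidable_pred k P \<Longrightarrow> decidable_pred k Q \<Longrightarrow> decidable_pred k (\<lambda>xs. P xs \<and> Q xs)"
  unfolding decidable_pred_def by (drule (1) computable_mult) (erule computable_cong, simp)

lemma decidable_pred_disj:
  "decidable_pred k P \<Longrightarrow> decidable_pred k Q \<Longrightarrow> decidable_pred k (\<lambda>xs. P xs \<or> Q xs)"
  using decidable_pred_not[OF decidable_pred_conj[OF decidable_pred_not decidable_pred_not]] by simp

lemma decidable_pred_imp:
  "decidable_pred k P \<Longrightarrow> decidable_pred k Q \<Longrightarrow> decidable_pred k (\<lambda>xs. P xs \<longrightarrow> Q xs)"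
  using decidable_pred_disj[OF decidable_pred_not] by simp

lemma decidable_pred_list_all:
  "(\<And>j. j \<in> set js \<Longrightarrow> decidable_pred k (P j)) \<Longrightarrow> decidable_pred k (\<lambda>xs. \<forall>j\<in>set js. P j xs)"
  by (induction js) (auto intro: decidable_pred_const decidable_pred_conj)

lemma decidable_pred_comp2: "decidable_pred (Suc (Suc 0)) P \<Longrightarrow> computable k f \<Longrightarrow> computable k g \<Longrightarrow>
   decidable_pred k (\<lambda>xs. P [f xs, g xs])"
  unfolding decidable_pred_def using computable_comp2 by fastforce

lemma computable_Least_pred: "decidable_pred (Suc k) P \<Longrightarrow> (\<And>xs. length xs = k \<Longrightarrow> \<exists>m. P (m # xs)) \<Longrightarrow>
   computable k (\<lambda>xs. LEAST m. P (m # xs))"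
proof -
  assume P: "decidable_pred (Suc k) P" and ex: "\<And>xs. length xs = k \<Longrightarrow> \<exists>m. P (m # xs)"
  have "computable (Suc k) (\<lambda>xs. if \<not> P xs then 1 else 0)"
    using decidable_pred_not[OF P] unfolding decidable_pred_def .
  then have "computable k (\<lambda>xs. LEAST m. (if \<not> P (m # xs) then 1 else 0) = (0::nat))"
    by (rule computable_Least) (use ex in auto)
  then show ?thesis by (simp add: if_split_eq1)
qed

lemma decidable_pred_bounded_ex:
  assumes P: "decidable_pred (Suc k) P" and B: "computable k B"
  shows "decidable_pred k (\<lambda>xs. \<exists>c < B xs. P (c # xs))"
proof -
  define c0 where "c0 xs = (LEAST c. B xs \<le> c \<or> P (c # xs))" for xs
  have "decidable_pred (Suc k) (\<lambda>ys. B (tl ys) \<le> ys ! 0 \<or> P ys)"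
    by (intro decidable_pred_disj decidable_pred_le computable_tl B computable_nth0 P)
  then have "computable k c0"
    unfolding c0_def by (rule computable_Least_pred[where P = "\<lambda>ys. B (tl ys) \<le> ys ! 0 \<or> P ys", simplified])
      auto
  then have "decidable_pred k (\<lambda>xs. \<not> B xs \<le> c0 xs)"
    by (intro decidable_pred_not decidable_pred_le B)
  moreover have "(\<exists>c < B xs. P (c # xs)) \<longleftrightarrow> \<not> B xs \<le> c0 xs" for xs
  proof
    assume "\<exists>c < B xs. P (c # xs)"
    then obtain c where "c < B xs" "P (c # xs)" by blast
    then show "\<not> B xs \<le> c0 xs" unfolding c0_def by (metis (mono_tags) Least_le leD order_less_le_trans)
  next
    assume "\<not> B xs \<le> c0 xs"
    moreover have "B xs \<le> c0 xs \<or> P (c0 xs # xs)"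
      unfolding c0_def by (rule LeastI[of _ "B xs"]) simp
    ultimately show "\<exists>c < B xs. P (c # xs)" by (auto simp: not_le)
  qed
  ultimately show ?thesis by simp
qed

lemma computable_div_Suc: "computable k f \<Longrightarrow> computable k g \<Longrightarrow> computable k (\<lambda>xs. f xs div Suc (g xs))"
proof -
  have "decidable_pred (Suc (Suc (Suc 0))) (\<lambda>ys. \<not> Suc (ys ! 0) * Suc (ys ! 2) \<le> ys ! 1)"
    by (intro decidable_pred_not decidable_pred_le computable_mult computable_Suc computable_nth0
        computable_nth1 computable_nth2)
  then have "computable (Suc (Suc 0)) (\<lambda>xs. LEAST q. \<not> Suc ((q # xs) ! 0) * Suc ((q # xs) ! 2) \<le> (q # xs) ! 1)"
  proof (rule computable_Least_pred)
    fix xs :: "nat list"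
    show "\<exists>q. \<not> Suc ((q # xs) ! 0) * Suc ((q # xs) ! 2) \<le> (q # xs) ! 1"
      by (rule exI[of _ "xs ! 0"]) simp
  qed
  moreover have "(LEAST q. \<not> Suc q * Suc b \<le> a) = a div Suc b" for a b :: nat
  proof (rule Least_equality)
    show "\<not> Suc (a div Suc b) * Suc b \<le> a"
      using div_less_iff_less_mult[of "Suc b" a "Suc (a div Suc b)"] by (simp only: not_le) simp
    show "a div Suc b \<le> y" if "\<not> Suc y * Suc b \<le> a" for y
      using that div_less_iff_less_mult[of "Suc b" a "Suc y"] by (simp only: not_le) simp
  qed
  ultimately have "computable (Suc (Suc 0)) (\<lambda>xs. xs ! 0 div Suc (xs ! 1))"
    by (elim computable_cong) (simp del: mult_Suc mult_Suc_right)
  then show "computable k f \<Longrightarrow> computable k g \<Longrightarrow> ?thesis" using computable_comp2 by fastforce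
qed

lemma computable_mod_Suc: "computable k f \<Longrightarrow> computable k g \<Longrightarrow> computable k (\<lambda>xs. f xs mod Suc (g xs))"
proof -
  assume "computable k f" "computable k g"
  then have "computable k (\<lambda>xs. f xs - Suc (g xs) * (f xs div Suc (g xs)))"
    by (intro computable_diff computable_mult computable_Suc computable_div_Suc)
  then show ?thesis by (simp only: minus_mult_div_eq_mod)
qed

section \<open>Computable codes of pairs, lists and words\<close>

lemma computable_triangle: "computable k f \<Longrightarrow> computable k (\<lambda>xs. triangle (f xs))"
proof -
  have "computable (Suc 0) (\<lambda>xs. prim_rec (\<lambda>_. 0) (\<lambda>ys. ys ! 1 + Suc (ys ! 0)) (hd xs) (tl xs))"
    by (rule computable_prim_rec[OF computable_zero computable_add[OF computable_nth1
          computable_Suc[OF computable_nth0]]])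
  moreover have "prim_rec (\<lambda>_. 0) (\<lambda>ys. ys ! 1 + Suc (ys ! 0)) n ys = triangle n" for n ys
    by (induction n) auto
  ultimately have "computable (Suc 0) (\<lambda>xs. triangle (xs ! 0))"
    by (auto elim!: computable_cong simp: length_Suc_conv)
  then show "computable k f \<Longrightarrow> ?thesis" using computable_comp1 by fastforce
qed

lemma computable_prod_encode:
  "computable k f \<Longrightarrow> computable k g \<Longrightarrow> computable k (\<lambda>xs. prod_encode (f xs, g xs))"
  unfolding prod_encode_def by (simp add: computable_add computable_triangle)

definition tri_root :: "nat \<Rightarrow> nat" where
  "tri_root z = (LEAST s. z < triangle (Suc s))"

lemma prod_decode_tri_root:
  "prod_decode z = (z - triangle (tri_root z), tri_root z - (z - triangle (tri_root z)))"
proof -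
  let ?s = "tri_root z"
  have "z < triangle (Suc z)" by (induction z) auto
  then have upper: "z < triangle (Suc ?s)" unfolding tri_root_def by (rule LeastI)
  have lower: "triangle ?s \<le> z"
  proof (cases ?s)
    case (Suc s')
    then have "\<not> z < triangle (Suc s')" unfolding tri_root_def by (metis lessI not_less_Least)
    then show ?thesis using Suc by simp
  qed simp
  have "prod_encode (z - triangle ?s, ?s - (z - triangle ?s)) = z"
    unfolding prod_encode_def using upper lower by simp
  then show ?thesis by (metis prod_encode_inverse)
qed

lemma computable_tri_root: "computable (Suc 0) (\<lambda>xs. tri_root (xs ! 0))"
proof -
  have "decidable_pred (Suc (Suc 0)) (\<lambda>ys. \<not> triangle (Suc (ys ! 0)) \<le> ys ! 1)"
    by (intro decidable_pred_not decidable_pred_le computable_triangle computable_Suc computable_nth0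
        computable_nth1)
  then have "computable (Suc 0) (\<lambda>xs. LEAST s. \<not> triangle (Suc ((s # xs) ! 0)) \<le> (s # xs) ! 1)"
  proof (rule computable_Least_pred)
    fix xs :: "nat list"
    have "xs ! 0 < triangle (Suc (xs ! 0))" by (induction "xs ! 0") auto
    then show "\<exists>s. \<not> triangle (Suc ((s # xs) ! 0)) \<le> (s # xs) ! 1"
      by (intro exI[of _ "xs ! 0"]) simp
  qed
  then show ?thesis by (rule computable_cong) (simp add: tri_root_def not_le)
qed

lemma computable_fst_prod_decode: "computable k f \<Longrightarrow> computable k (\<lambda>xs. fst (prod_decode (f xs)))"
proof -
  have "computable (Suc 0) (\<lambda>xs. xs ! 0 - triangle (tri_root (xs ! 0)))"
    by (rule computable_diff[OF computable_nth0 computable_triangle[OF computable_tri_root]])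
  then have "computable (Suc 0) (\<lambda>xs. fst (prod_decode (xs ! 0)))" by (simp add: prod_decode_tri_root)
  then show "computable k f \<Longrightarrow> ?thesis" using computable_comp1 by fastforce
qed

lemma computable_snd_prod_decode: "computable k f \<Longrightarrow> computable k (\<lambda>xs. snd (prod_decode (f xs)))"
proof -
  have "computable (Suc 0) (\<lambda>xs. tri_root (xs ! 0) - (xs ! 0 - triangle (tri_root (xs ! 0))))"
    by (rule computable_diff[OF computable_tri_root computable_diff[OF computable_nth0
          computable_triangle[OF computable_tri_root]]])
  then have "computable (Suc 0) (\<lambda>xs. snd (prod_decode (xs ! 0)))" by (simp add: prod_decode_tri_root)
  then show "computable k f \<Longrightarrow> ?thesis" using computable_comp1 by fastforce
qed

definition code_hd :: "nat \<Rightarrow> nat" where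
  "code_hd p = fst (prod_decode (p - 1))"

definition code_tl :: "nat \<Rightarrow> nat" where
  "code_tl p = snd (prod_decode (p - 1))"

lemma code_hd_list_encode [simp]: "code_hd (list_encode (x # xs)) = x"
  by (simp add: code_hd_def)

lemma code_tl_list_encode [simp]: "code_tl (list_encode (x # xs)) = list_encode xs"
  by (simp add: code_tl_def)

lemma code_tl_0 [simp]: "code_tl 0 = 0"
  by (simp add: code_tl_def prod_decode_def prod_decode_aux.simps)

lemma computable_code_hd: "computable k f \<Longrightarrow> computable k (\<lambda>xs. code_hd (f xs))"
  unfolding code_hd_def by (intro computable_fst_prod_decode computable_minus_one)

lemma computable_code_tl: "computable k f \<Longrightarrow> computable k (\<lambda>xs. code_tl (f xs))"
  unfolding code_tl_def by (intro computable_snd_prod_decode computable_minus_one)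

lemma code_tl_funpow: "(code_tl ^^ k) (list_encode xs) = list_encode (drop k xs)"
proof (induction k arbitrary: xs)
  case (Suc k)
  show ?case
  proof (cases xs)
    case Nil
    have "(code_tl ^^ k) 0 = 0" by (induction k) auto
    then show ?thesis using Nil by (simp add: funpow_Suc_right del: funpow.simps)
  next
    case (Cons y ys)
    then show ?thesis using Suc
      by (simp add: funpow_Suc_right del: funpow.simps list_encode.simps)
  qed
qed simp

lemma computable_code_tl_funpow:
  "computable k f \<Longrightarrow> computable k g \<Longrightarrow> computable k (\<lambda>xs. (code_tl ^^ f xs) (g xs))"
proof -
  have "computable (Suc (Suc 0)) (\<lambda>xs. prim_rec (\<lambda>ys. ys ! 0) (\<lambda>ys. code_tl (ys ! 1)) (hd xs) (tl xs))"
    by (rule computable_prim_rec[OF computable_nth0 computable_code_tl[OF computable_nth1]])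
  moreover have "prim_rec (\<lambda>ys. ys ! 0) (\<lambda>ys. code_tl (ys ! 1)) n ys = (code_tl ^^ n) (ys ! 0)" for n ys
    by (induction n) auto
  ultimately have "computable (Suc (Suc 0)) (\<lambda>xs. (code_tl ^^ (xs ! 0)) (xs ! 1))"
    by (auto elim!: computable_cong simp: length_Suc_conv)
  then show "computable k f \<Longrightarrow> computable k g \<Longrightarrow> ?thesis" using computable_comp2 by fastforce
qed

definition code_length :: "nat \<Rightarrow> nat" where
  "code_length p = (LEAST k. (code_tl ^^ k) p = 0)"

lemma code_length_list_encode [simp]: "code_length (list_encode xs) = length xs"
proof -
  have "(code_tl ^^ k) (list_encode xs) = 0 \<longleftrightarrow> length xs \<le> k" for k
    by (simp add: code_tl_funpow)
      (metis list_encode.simps(1) list_encode_inverse list_decode.simps(1) drop_eq_Nil)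
  then show ?thesis unfolding code_length_def by (intro Least_equality) auto
qed

lemma computable_code_length: "computable k f \<Longrightarrow> computable k (\<lambda>xs. code_length (f xs))"
proof -
  have "computable (Suc 0) (\<lambda>xs. LEAST m. (code_tl ^^ ((m # xs) ! 0)) ((m # xs) ! 1) = 0)"
  proof (rule computable_Least[OF computable_code_tl_funpow[OF computable_nth0 computable_nth1]])
    fix xs :: "nat list"
    have "(code_tl ^^ length (list_decode (xs ! 0))) (xs ! 0) = 0"
      by (metis code_tl_funpow list_decode_inverse drop_all order_refl list_encode.simps(1))
    then show "\<exists>m. (code_tl ^^ ((m # xs) ! 0)) ((m # xs) ! 1) = 0" by auto
  qed
  then have "computable (Suc 0) (\<lambda>xs. code_length (xs ! 0))"
    by (rule computable_cong) (simp add: code_length_def)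
  then show "computable k f \<Longrightarrow> ?thesis" using computable_comp1 by fastforce
qed

(* The code of a concatenation is built by consing the elements of the first list onto the code of
   the second, last element first. *)

definition code_append_step :: "nat list \<Rightarrow> nat" where
  "code_append_step ys =
     Suc (prod_encode (code_hd ((code_tl ^^ (code_length (ys ! 3) - Suc (ys ! 0))) (ys ! 3)), ys ! 1))"

definition code_append :: "nat \<Rightarrow> nat \<Rightarrow> nat" where
  "code_append p q = prim_rec (\<lambda>ys. ys ! 0) code_append_step (code_length p) [q, p]"

lemma prim_rec_code_append_step: "n \<le> length xs \<Longrightarrow>
   prim_rec (\<lambda>ys. ys ! 0) code_append_step n [list_encode ys, list_encode xs] =
   list_encode (drop (length xs - n) xs @ ys)"
proof (induction n)
  case (Suc n)
  then have n: "n < length xs" by simp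
  have drop: "drop (length xs - Suc n) xs = xs ! (length xs - Suc n) # drop (length xs - n) xs"
    using n Cons_nth_drop_Suc[of "length xs - Suc n" xs] by (simp add: Suc_diff_Suc)
  then have "code_hd ((code_tl ^^ (length xs - Suc n)) (list_encode xs)) = xs ! (length xs - Suc n)"
    by (simp add: code_tl_funpow del: list_encode.simps)
  then show ?case
    using Suc.IH n drop by (simp add: code_append_step_def del: list_encode.simps) simp
qed simp

lemma code_append_list_encode [simp]:
  "code_append (list_encode xs) (list_encode ys) = list_encode (xs @ ys)"
  unfolding code_append_def using prim_rec_code_append_step[of "length xs" xs ys] by simp

lemma computable_code_append:
  "computable k f \<Longrightarrow> computable k g \<Longrightarrow> computable k (\<lambda>xs. code_append (f xs) (g xs))"
proof -
  have "computable (Suc (Suc (Suc (Suc 0)))) code_append_step"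
    unfolding code_append_step_def[abs_def]
    by (intro computable_Suc computable_prod_encode computable_code_hd computable_code_tl_funpow
        computable_diff computable_code_length computable_nth0 computable_nth1 computable_nth3)
  then have "computable (Suc (Suc (Suc 0))) (\<lambda>xs. prim_rec (\<lambda>ys. ys ! 0) code_append_step (hd xs) (tl xs))"
    by (rule computable_prim_rec[OF computable_nth0])
  then have "computable (Suc (Suc 0)) (\<lambda>xs. code_append (xs ! 0) (xs ! 1))"
    using computable_comp3[OF _ computable_code_length[OF computable_nth0] computable_nth1 computable_nth0]
    by (fastforce simp: code_append_def)
  then show "computable k f \<Longrightarrow> computable k g \<Longrightarrow> ?thesis" using computable_comp2 by fastforce
qed

definition letter_code :: "letter \<Rightarrow> nat" where
  "letter_code l = 2 * fst l + (if snd l then 1 else 0)"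

definition word_decode :: "nat \<Rightarrow> letter list" where
  "word_decode q = map (\<lambda>x. (x div 2, odd x)) (list_decode q)"

lemma enc_word_eq: "enc_word w = list_encode (map letter_code w)"
  unfolding enc_word_def letter_code_def by (metis (no_types, lifting) case_prod_beta map_eq_conv)

lemma enc_word_word_decode [simp]: "enc_word (word_decode q) = q"
proof -
  have "map letter_code (word_decode q) = list_decode q"
    unfolding word_decode_def letter_code_def by (rule nth_equalityI) auto
  then show ?thesis by (simp add: enc_word_eq)
qed

lemma word_decode_enc_word [simp]: "word_decode (enc_word w) = w"
proof -
  have "map (\<lambda>x. (x div 2, odd x)) (map letter_code w) = w"
    by (rule nth_equalityI) (auto simp: letter_code_def prod_eq_iff)
  then show ?thesis by (simp add: word_decode_def enc_word_eq)
qed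

lemma enc_word_append: "enc_word (u @ v) = code_append (enc_word u) (enc_word v)"
  by (simp add: enc_word_eq)

lemma computable_enc_word_replicate:
  "computable k f \<Longrightarrow> computable k (\<lambda>xs. enc_word (concat (replicate (f xs) v)))"
proof -
  have "computable (Suc 0)
      (\<lambda>xs. ((\<lambda>a. code_append (enc_word v) ((a # tl xs) ! 0)) ^^ (hd xs)) ((\<lambda>_. 0) (tl xs)))"
    by (rule computable_funpow[OF computable_code_append[OF computable_const computable_nth0]
          computable_const])
  moreover have "((\<lambda>a. code_append (enc_word v) a) ^^ k) 0 = enc_word (concat (replicate k v))" for k
    by (induction k) (auto simp: enc_word_append enc_word_eq)
  ultimately have "computable (Suc 0) (\<lambda>xs. enc_word (concat (replicate (xs ! 0) v)))"
    by (auto elim!: computable_cong simp: length_Suc_conv)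
  then show "computable k f \<Longrightarrow> ?thesis" using computable_comp1 by fastforce
qed

lemma prod_encode_mem_word_pairs:
  "prod_encode (p, q) \<in> {prod_encode (enc_word w1, enc_word w2) | w1 w2. P w1 w2} \<longleftrightarrow>
   P (word_decode p) (word_decode q)"
proof
  assume "prod_encode (p, q) \<in> {prod_encode (enc_word w1, enc_word w2) | w1 w2. P w1 w2}"
  then obtain w1 w2 where "prod_encode (p, q) = prod_encode (enc_word w1, enc_word w2)" "P w1 w2"
    by blast
  then show "P (word_decode p) (word_decode q)" by (simp add: prod_encode_eq)
qed (metis (mono_tags, lifting) enc_word_word_decode mem_Collect_eq)

lemma decidable_pairs_iff:
  "decidable_pairs P \<longleftrightarrow>
   decidable_pred (Suc (Suc 0)) (\<lambda>xs. P (word_decode (xs ! 0)) (word_decode (xs ! 1)))"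
proof
  let ?S = "{prod_encode (enc_word w1, enc_word w2) | w1 w2. P w1 w2}"
  assume "decidable_pairs P"
  then obtain F where F: "\<forall>x. reval F [x] (if x \<in> ?S then 1 else 0)"
    unfolding decidable_pairs_def decidable_set_def by blast
  have "computable (Suc 0) (\<lambda>xs. if xs ! 0 \<in> ?S then 1 else 0)"
    unfolding computable_def
  proof (intro exI[of _ F] allI impI)
    fix xs :: "nat list" assume "length xs = Suc 0"
    then obtain x where "xs = [x]" by (auto simp: length_Suc_conv)
    then show "reval F xs (if xs ! 0 \<in> ?S then 1 else 0)" using F by (simp only: nth_Cons_0)
  qed
  from computable_comp1[OF this computable_prod_encode[OF computable_nth0 computable_nth1]]
  have "computable (Suc (Suc 0)) (\<lambda>xs. if prod_encode (xs ! 0, xs ! 1) \<in> ?S then 1 else 0)"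
    by (simp only: nth_Cons_0)
  then show "decidable_pred (Suc (Suc 0)) (\<lambda>xs. P (word_decode (xs ! 0)) (word_decode (xs ! 1)))"
    unfolding decidable_pred_def prod_encode_mem_word_pairs .
next
  let ?S = "{prod_encode (enc_word w1, enc_word w2) | w1 w2. P w1 w2}"
  assume "decidable_pred (Suc (Suc 0)) (\<lambda>xs. P (word_decode (xs ! 0)) (word_decode (xs ! 1)))"
  from decidable_pred_comp2[OF this computable_fst_prod_decode[OF computable_nth0[of 0]]
      computable_snd_prod_decode[OF computable_nth0[of 0]]]
  have "decidable_pred (Suc 0) (\<lambda>xs. P (word_decode (fst (prod_decode (xs ! 0))))
      (word_decode (snd (prod_decode (xs ! 0)))))"
    by simp
  then have "computable (Suc 0) (\<lambda>xs. if xs ! 0 \<in> ?S then 1 else 0)"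
    unfolding decidable_pred_def
    using prod_encode_mem_word_pairs[of "fst (prod_decode x)" "snd (prod_decode x)" P for x]
    by (simp add: prod_decode_inverse)
  then obtain F where F: "\<forall>xs. length xs = Suc 0 \<longrightarrow> reval F xs (if xs ! 0 \<in> ?S then 1 else 0)"
    unfolding computable_def by blast
  have "\<forall>x. reval F [x] (if x \<in> ?S then 1 else 0)"
  proof
    fix x show "reval F [x] (if x \<in> ?S then 1 else 0)"
      using F[rule_format, of "[x]"] by (simp only: length_Cons list.size(3) nth_Cons_0 simp_thms)
  qed
  then show "decidable_pairs P" unfolding decidable_pairs_def decidable_set_def by blast
qed

lemma Xn_iff: "(i, m) \<in> Xn n \<longleftrightarrow> 1 \<le> i \<and> i \<le> n \<and> 1 \<le> m"
  by (auto simp: Xn_def)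

lemma SymX_bij: "g \<in> SymX n \<Longrightarrow> bij_betw g (Xn n) (Xn n)"
  by (simp add: SymX_def)

lemma SymX_fixes: "g \<in> SymX n \<Longrightarrow> p \<notin> Xn n \<Longrightarrow> g p = p"
  unfolding SymX_def by blast

lemma SymX_maps_to: "g \<in> SymX n \<Longrightarrow> p \<in> Xn n \<Longrightarrow> g p \<in> Xn n"
  using SymX_bij bij_betwE by blast

lemma id_SymX [simp]: "id \<in> SymX n"
  by (simp add: SymX_def bij_betw_id)

lemma comp_SymX: "g \<in> SymX n \<Longrightarrow> h \<in> SymX n \<Longrightarrow> h \<circ> g \<in> SymX n"
  unfolding SymX_def by (auto intro: bij_betw_trans)

lemma ginv_comp_self: "g \<in> SymX n \<Longrightarrow> ginv n g \<circ> g = id"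
proof
  fix p assume g: "g \<in> SymX n"
  show "(ginv n g \<circ> g) p = id p"
  proof (cases "p \<in> Xn n")
    case True
    then have "inv_into (Xn n) g (g p) = p"
      using g SymX_bij bij_betw_imp_inj_on inv_into_f_f by metis
    then show ?thesis using True SymX_maps_to[OF g True] by (simp add: ginv_def)
  qed (simp add: ginv_def SymX_fixes[OF g])
qed

lemma comp_ginv_self: "g \<in> SymX n \<Longrightarrow> g \<circ> ginv n g = id"
proof
  fix p assume g: "g \<in> SymX n"
  show "(g \<circ> ginv n g) p = id p"
  proof (cases "p \<in> Xn n")
    case True
    then have "g (inv_into (Xn n) g p) = p"
      using g SymX_bij by (metis bij_betw_imp_surj_on f_inv_into_f)
    then show ?thesis using True by (simp add: ginv_def)
  qed (simp add: ginv_def SymX_fixes[OF g])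
qed

lemma ginv_SymX: "g \<in> SymX n \<Longrightarrow> ginv n g \<in> SymX n"
proof -
  assume "g \<in> SymX n"
  then have "bij_betw (inv_into (Xn n) g) (Xn n) (Xn n)" using SymX_bij bij_betw_inv_into by blast
  then have "bij_betw (ginv n g) (Xn n) (Xn n)"
    by (rule bij_betw_cong[THEN iffD1, rotated]) (simp add: ginv_def)
  then show ?thesis by (simp add: SymX_def ginv_def)
qed

lemma ginv_eqI: "g \<in> SymX n \<Longrightarrow> q \<circ> g = id \<Longrightarrow> ginv n g = q"
proof -
  assume g: "g \<in> SymX n" and q: "q \<circ> g = id"
  have "ginv n g = (q \<circ> g) \<circ> ginv n g" using q by simp
  also have "\<dots> = q" using comp_ginv_self[OF g] by (simp add: comp_assoc)
  finally show ?thesis .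
qed

lemma ginv_comp: "g \<in> SymX n \<Longrightarrow> h \<in> SymX n \<Longrightarrow> ginv n (h \<circ> g) = ginv n g \<circ> ginv n h"
proof (rule ginv_eqI)
  assume g: "g \<in> SymX n" and h: "h \<in> SymX n"
  then show "h \<circ> g \<in> SymX n" by (rule comp_SymX)
  have "ginv n g \<circ> ginv n h \<circ> (h \<circ> g) = ginv n g \<circ> (ginv n h \<circ> h) \<circ> g" by (simp add: comp_assoc)
  then show "ginv n g \<circ> ginv n h \<circ> (h \<circ> g) = id" using ginv_comp_self[OF g] ginv_comp_self[OF h] by simp
qed

lemma ginv_id: "ginv n id = id"
  by (rule ginv_eqI) auto

lemma funpow_inverse:
  fixes f g :: "'a \<Rightarrow> 'a"
  shows "f \<circ> g = id \<Longrightarrow> f ^^ k \<circ> g ^^ k = id"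
proof (induction k)
  case (Suc k)
  have "f ^^ Suc k \<circ> g ^^ Suc k = f ^^ k \<circ> (f \<circ> g) \<circ> g ^^ k"
    unfolding funpow_Suc_right[of k f] funpow.simps(2)[of k g] by (simp only: comp_assoc)
  also have "\<dots> = f ^^ k \<circ> g ^^ k" by (simp only: Suc.prems comp_id)
  also have "\<dots> = id" by (rule Suc.IH[OF Suc.prems])
  finally show ?case .
qed simp

lemma SymX_funpow: "g \<in> SymX n \<Longrightarrow> g ^^ k \<in> SymX n"
  by (induction k) (simp_all add: comp_SymX)

lemma ginv_funpow: "g \<in> SymX n \<Longrightarrow> ginv n (g ^^ k) = ginv n g ^^ k"
  by (intro ginv_eqI SymX_funpow funpow_inverse ginv_comp_self)

section \<open>H_n and the translation lengths\<close>

lemma HnI: "g \<in> SymX n \<Longrightarrow>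
    (\<And>i. i \<in> {1..n} \<Longrightarrow> \<exists>z t. \<forall>m. 1 \<le> m \<and> z \<le> m \<longrightarrow> g (i, m) = (i, nat (int m + t))) \<Longrightarrow>
    g \<in> Hn n"
proof -
  assume g: "g \<in> SymX n"
    and ex: "\<And>i. i \<in> {1..n} \<Longrightarrow> \<exists>z t. \<forall>m. 1 \<le> m \<and> z \<le> m \<longrightarrow> g (i, m) = (i, nat (int m + t))"
  then obtain z t where "\<forall>i\<in>{1..n}. \<forall>m. 1 \<le> m \<and> z i \<le> m \<longrightarrow> g (i, m) = (i, nat (int m + t i))"
    by metis
  with g show ?thesis unfolding Hn_def by blast
qed

lemma Hn_SymX: "g \<in> Hn n \<Longrightarrow> g \<in> SymX n"
  unfolding Hn_def by blast

lemma tH_eqI: "\<forall>m. 1 \<le> m \<and> z \<le> m \<longrightarrow> g (i, m) = (i, nat (int m + t)) \<Longrightarrow> tH g i = t"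
  unfolding tH_def
proof (rule the_equality)
  assume P: "\<forall>m. 1 \<le> m \<and> z \<le> m \<longrightarrow> g (i, m) = (i, nat (int m + t))"
  then show "\<exists>z. \<forall>m. 1 \<le> m \<and> z \<le> m \<longrightarrow> g (i, m) = (i, nat (int m + t))" by blast
  fix t' assume "\<exists>z. \<forall>m. 1 \<le> m \<and> z \<le> m \<longrightarrow> g (i, m) = (i, nat (int m + t'))"
  then obtain z' where P': "\<forall>m. 1 \<le> m \<and> z' \<le> m \<longrightarrow> g (i, m) = (i, nat (int m + t'))" by blast
  define m where "m = z + z' + 1 + nat \<bar>t\<bar> + nat \<bar>t'\<bar>"
  have "g (i, m) = (i, nat (int m + t))" using P by (auto simp: m_def)
  moreover have "g (i, m) = (i, nat (int m + t'))" using P' by (auto simp: m_def)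
  ultimately have "nat (int m + t) = nat (int m + t')" by simp
  moreover have "int m + t \<ge> 1" "int m + t' \<ge> 1" by (auto simp: m_def)
  ultimately show "t' = t" by simp
qed

lemma tH_eventually: "g \<in> Hn n \<Longrightarrow> i \<in> {1..n} \<Longrightarrow>
   \<exists>z. \<forall>m. z \<le> m \<longrightarrow> g (i, m) = (i, nat (int m + tH g i)) \<and> 1 \<le> int m + tH g i"
proof -
  assume "g \<in> Hn n" "i \<in> {1..n}"
  then obtain z t where P: "\<forall>m. 1 \<le> m \<and> z \<le> m \<longrightarrow> g (i, m) = (i, nat (int m + t))"
    unfolding Hn_def by blast
  then show ?thesis using tH_eqI[OF P] by (intro exI[of _ "z + 1 + nat \<bar>t\<bar>"]) auto
qed

lemma comp_translates_eventually:
  assumes g: "g \<in> Hn n" and h: "h \<in> Hn n" and i: "i \<in> {1..n}"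
  shows "\<exists>z. \<forall>m. 1 \<le> m \<and> z \<le> m \<longrightarrow> (h \<circ> g) (i, m) = (i, nat (int m + (tH g i + tH h i)))"
proof -
  obtain zg where zg: "\<forall>m. zg \<le> m \<longrightarrow> g (i, m) = (i, nat (int m + tH g i)) \<and> 1 \<le> int m + tH g i"
    using tH_eventually[OF g i] by blast
  obtain zh where zh: "\<forall>m. zh \<le> m \<longrightarrow> h (i, m) = (i, nat (int m + tH h i)) \<and> 1 \<le> int m + tH h i"
    using tH_eventually[OF h i] by blast
  show ?thesis
  proof (intro exI[of _ "zg + zh + nat \<bar>tH g i\<bar>"] allI impI)
    fix m assume m: "1 \<le> m \<and> zg + zh + nat \<bar>tH g i\<bar> \<le> m"
    then have gm: "g (i, m) = (i, nat (int m + tH g i))" "1 \<le> int m + tH g i" using zg by auto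
    moreover have "zh \<le> nat (int m + tH g i)" using m gm by linarith
    ultimately show "(h \<circ> g) (i, m) = (i, nat (int m + (tH g i + tH h i)))"
      using zh by (simp add: add.assoc)
  qed
qed

lemma Hn_comp: "g \<in> Hn n \<Longrightarrow> h \<in> Hn n \<Longrightarrow> h \<circ> g \<in> Hn n"
  by (rule HnI[OF comp_SymX[OF Hn_SymX Hn_SymX]]) (use comp_translates_eventually in blast)+

lemma tH_comp: "g \<in> Hn n \<Longrightarrow> h \<in> Hn n \<Longrightarrow> i \<in> {1..n} \<Longrightarrow> tH (h \<circ> g) i = tH g i + tH h i"
  using comp_translates_eventually tH_eqI by blast

lemma ginv_translates_eventually:
  assumes g: "g \<in> Hn n" and i: "i \<in> {1..n}"
  shows "\<exists>z. \<forall>m. 1 \<le> m \<and> z \<le> m \<longrightarrow> ginv n g (i, m) = (i, nat (int m + - tH g i))"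
proof -
  obtain zg where zg: "\<forall>m. zg \<le> m \<longrightarrow> g (i, m) = (i, nat (int m + tH g i)) \<and> 1 \<le> int m + tH g i"
    using tH_eventually[OF g i] by blast
  show ?thesis
  proof (intro exI[of _ "zg + 1 + nat \<bar>tH g i\<bar>"] allI impI)
    fix m' assume m': "1 \<le> m' \<and> zg + 1 + nat \<bar>tH g i\<bar> \<le> m'"
    define m where "m = nat (int m' - tH g i)"
    have "int m = int m' - tH g i" "zg \<le> m" using m' unfolding m_def by linarith+
    then have "g (i, m) = (i, m')" using zg by auto
    moreover have "ginv n g (g (i, m)) = (i, m)"
      using ginv_comp_self[OF Hn_SymX[OF g]] by (metis comp_apply id_apply)
    ultimately show "ginv n g (i, m') = (i, nat (int m' + - tH g i))" using m_def by simp
  qed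
qed

lemma Hn_ginv: "g \<in> Hn n \<Longrightarrow> ginv n g \<in> Hn n"
  by (rule HnI[OF ginv_SymX[OF Hn_SymX]]) (use ginv_translates_eventually in blast)+

lemma tH_ginv: "g \<in> Hn n \<Longrightarrow> i \<in> {1..n} \<Longrightarrow> tH (ginv n g) i = - tH g i"
  using ginv_translates_eventually tH_eqI by blast

lemma Hn_id: "id \<in> Hn n"
  by (rule HnI) (auto intro!: exI[of _ 0])

lemma tH_id: "tH id i = 0"
  by (rule tH_eqI[of 0]) auto

lemma Hn_funpow: "g \<in> Hn n \<Longrightarrow> g ^^ k \<in> Hn n"
  by (induction k) (auto simp: Hn_id Hn_comp)

lemma tH_funpow: "g \<in> Hn n \<Longrightarrow> i \<in> {1..n} \<Longrightarrow> tH (g ^^ k) i = int k * tH g i"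
proof (induction k)
  case (Suc k)
  then have "tH (g \<circ> g ^^ k) i = tH (g ^^ k) i + tH g i" by (intro tH_comp Hn_funpow)
  then show ?case using Suc by (simp add: algebra_simps del: o_apply)
qed (simp add: tH_id)

lemma bij_betw_image_eq_if_complement:
  assumes "bij_betw g X X" "T \<subseteq> X" "S \<subseteq> X" "g ` (X - T) = X - S"
  shows "g ` T = S"
proof -
  have "g ` (X - (X - T)) = g ` X - g ` (X - T)"
    using assms(1) by (intro inj_on_image_set_diff) (auto simp: bij_betw_def)
  moreover have "X - (X - T) = T" "X - (X - S) = S" using assms(2,3) by blast+
  ultimately show ?thesis using assms(1,4) by (simp add: bij_betw_def)
qed

lemma Hn_translates_beyond:
  assumes g: "g \<in> Hn n"
  obtains K where "1 \<le> K"
    and "\<And>i m. i \<in> {1..n} \<Longrightarrow> K \<le> m \<Longrightarrow> g (i, m) = (i, nat (int m + tH g i)) \<and> 1 \<le> int m + tH g i"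
proof -
  have "\<forall>i\<in>{1..n}. \<exists>z. \<forall>m. z \<le> m \<longrightarrow> g (i, m) = (i, nat (int m + tH g i)) \<and> 1 \<le> int m + tH g i"
    using tH_eventually[OF g] by blast
  then obtain z where z: "\<forall>i\<in>{1..n}. \<forall>m. z i \<le> m \<longrightarrow>
      g (i, m) = (i, nat (int m + tH g i)) \<and> 1 \<le> int m + tH g i"
    by (rule bchoice[THEN exE])
  show ?thesis
  proof
    show "1 \<le> Suc (\<Sum>i\<in>{1..n}. z i)" by simp
    fix i m assume "i \<in> {1..n}" "Suc (\<Sum>i\<in>{1..n}. z i) \<le> m"
    moreover have "z i \<le> (\<Sum>i\<in>{1..n}. z i)" using \<open>i \<in> {1..n}\<close> by (intro member_le_sum) auto
    ultimately show "g (i, m) = (i, nat (int m + tH g i)) \<and> 1 \<le> int m + tH g i" using z by simp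
  qed
qed

lemma Hn_image_tails:
  assumes K1: "1 \<le> K" and zK: "\<And>i m. i \<in> {1..n} \<Longrightarrow> K \<le> m \<Longrightarrow>
      g (i, m) = (i, nat (int m + tH g i)) \<and> 1 \<le> int m + tH g i"
  shows "g ` (Xn n - Sigma {1..n} (\<lambda>_. {1..<K})) = Xn n - Sigma {1..n} (\<lambda>i. {1..<nat (int K + tH g i)})"
    (is "g ` (Xn n - ?T) = Xn n - ?S")
proof
  show "g ` (Xn n - ?T) \<subseteq> Xn n - ?S"
  proof
    fix q assume "q \<in> g ` (Xn n - ?T)"
    then obtain p where p: "p \<in> Xn n" "p \<notin> ?T" and q: "q = g p" by blast
    obtain i m where "p = (i, m)" by (cases p)
    then have i: "i \<in> {1..n}" and m: "K \<le> m" and q: "q = g (i, m)" using p q by (auto simp: Xn_def)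
    have "q = (i, nat (int m + tH g i))" "1 \<le> int m + tH g i" using zK[OF i m] q by auto
    moreover have "nat (int K + tH g i) \<le> nat (int m + tH g i)" using m by linarith
    ultimately show "q \<in> Xn n - ?S" using i by (auto simp: Xn_def)
  qed
  show "Xn n - ?S \<subseteq> g ` (Xn n - ?T)"
  proof
    fix q assume q: "q \<in> Xn n - ?S"
    obtain i m' where q_eq: "q = (i, m')" by (cases q)
    then have i: "i \<in> {1..n}" and "(i, m') \<notin> ?S" "1 \<le> m'" using q by (auto simp: Xn_def)
    then have m': "nat (int K + tH g i) \<le> m'" by auto
    define m where "m = nat (int m' - tH g i)"
    have m: "int m = int m' - tH g i" "K \<le> m"
      using m' zK[OF i order_refl] unfolding m_def by linarith+
    then have "g (i, m) = q" using zK[OF i m(2)] q_eq by simp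
    moreover have "(i, m) \<in> Xn n - ?T" using i m(2) K1 by (simp add: Xn_def)
    ultimately show "q \<in> g ` (Xn n - ?T)" by blast
  qed
qed

text \<open>The translation lengths of an element of H_n sum to zero: beyond a level K it maps
  the tails above K onto the tails above K + t_i, so it maps the K - 1 low points of every ray
  bijectively onto the K - 1 + t_i low points.\<close>

lemma sum_tH_eq_0:
  assumes g: "g \<in> Hn n"
  shows "(\<Sum>i\<in>{1..n}. tH g i) = 0"
proof -
  obtain K where K1: "1 \<le> K" and zK: "\<And>i m. i \<in> {1..n} \<Longrightarrow> K \<le> m \<Longrightarrow>
      g (i, m) = (i, nat (int m + tH g i)) \<and> 1 \<le> int m + tH g i"
    using Hn_translates_beyond[OF g] by blast
  define c where "c i = nat (int K + tH g i)" for i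
  have c: "i \<in> {1..n} \<Longrightarrow> int (c i) = int K + tH g i \<and> 1 \<le> c i" for i
    using zK[of i K] unfolding c_def by (simp add: le_nat_iff)
  define T where "T = Sigma {1..n} (\<lambda>_. {1..<K})"
  define S where "S = Sigma {1..n} (\<lambda>i. {1..<c i})"
  have sub: "T \<subseteq> Xn n" "S \<subseteq> Xn n" by (auto simp: Xn_def T_def S_def)
  have "g ` (Xn n - T) = Xn n - S"
    using Hn_image_tails[OF K1 zK] unfolding T_def S_def c_def .
  then have "g ` T = S" by (rule bij_betw_image_eq_if_complement[OF SymX_bij[OF Hn_SymX[OF g]] sub])
  moreover have "inj_on g T"
    using SymX_bij[OF Hn_SymX[OF g]] sub(1) by (metis bij_betw_imp_inj_on inj_on_subset)
  ultimately have "card T = card S" using card_image by metis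
  then have "(\<Sum>i\<in>{1..n}. int (K - 1)) = (\<Sum>i\<in>{1..n}. int (c i - 1))"
    by (simp add: T_def S_def card_SigmaI flip: of_nat_sum of_nat_mult)
  also have "\<dots> = (\<Sum>i\<in>{1..n}. int K - 1 + tH g i)"
    by (rule sum.cong) (use c in \<open>simp_all add: of_nat_diff\<close>)
  finally have "(\<Sum>i\<in>{1..n}. int K - 1) = (\<Sum>i\<in>{1..n}. int K - 1 + tH g i)"
    using K1 by (simp add: of_nat_diff)
  then show ?thesis by (simp add: sum.distrib)
qed

lemma sact_apply: "(i, m) \<in> Xn n \<Longrightarrow> sact n \<sigma> (i, m) = (\<sigma> i, m)"
  by (simp add: sact_def)

lemma permutes_interval_ge1: "\<sigma> permutes {1..n} \<Longrightarrow> Suc 0 \<le> i \<Longrightarrow> i \<le> n \<Longrightarrow> Suc 0 \<le> \<sigma> i"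
  using permutes_in_image[of \<sigma> "{1..n}" i] by simp

lemma permutes_interval_le: "\<sigma> permutes {1..n} \<Longrightarrow> Suc 0 \<le> i \<Longrightarrow> i \<le> n \<Longrightarrow> \<sigma> i \<le> n"
  using permutes_in_image[of \<sigma> "{1..n}" i] by simp

lemma sact_inv: "\<sigma> permutes {1..n} \<Longrightarrow> sact n \<sigma> \<circ> sact n (inv \<sigma>) = id"
  using permutes_inv[of \<sigma> "{1..n}"]
  by (intro ext) (auto simp: sact_def Xn_iff permutes_inverses permutes_interval_ge1 permutes_interval_le)

lemma sact_SymX: "\<sigma> permutes {1..n} \<Longrightarrow> sact n \<sigma> \<in> SymX n"
proof -
  assume s: "\<sigma> permutes {1..n}"
  then have si: "inv \<sigma> permutes {1..n}" by (rule permutes_inv)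
  have "bij_betw (sact n \<sigma>) (Xn n) (Xn n)"
  proof (rule bij_betw_byWitness[where f'="sact n (inv \<sigma>)"])
    show "\<forall>a\<in>Xn n. sact n (inv \<sigma>) (sact n \<sigma> a) = a" "\<forall>a\<in>Xn n. sact n \<sigma> (sact n (inv \<sigma>) a) = a"
      using s si by (auto simp: sact_def Xn_iff permutes_inverses permutes_interval_ge1
          permutes_interval_le)
    show "sact n \<sigma> ` Xn n \<subseteq> Xn n" "sact n (inv \<sigma>) ` Xn n \<subseteq> Xn n"
      using s si by (auto simp: sact_def Xn_iff permutes_interval_ge1 permutes_interval_le)
  qed
  then show ?thesis by (simp add: SymX_def sact_def)
qed

text \<open>An intrinsic description of G_n, from which its closure properties are easy.\<close>

definition Gn_alt :: "nat \<Rightarrow> perm set" where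
  "Gn_alt n = {g \<in> SymX n. \<exists>\<sigma>. \<sigma> permutes {1..n} \<and>
     (\<forall>i\<in>{1..n}. \<exists>z t. \<forall>m. 1 \<le> m \<and> z \<le> m \<longrightarrow> g (i, m) = (\<sigma> i, nat (int m + t)))}"

lemma Gn_subset_Gn_alt: "Gn n \<subseteq> Gn_alt n"
proof
  fix g assume "g \<in> Gn n"
  then obtain \<omega> \<sigma> where g: "g = sact n \<sigma> \<circ> \<omega>" and w: "\<omega> \<in> Hn n" and s: "\<sigma> permutes {1..n}"
    unfolding Gn_def gmul_def by blast
  have "\<exists>z t. \<forall>m. 1 \<le> m \<and> z \<le> m \<longrightarrow> g (i, m) = (\<sigma> i, nat (int m + t))" if i: "i \<in> {1..n}" for i
  proof -
    obtain z where "\<forall>m. z \<le> m \<longrightarrow> \<omega> (i, m) = (i, nat (int m + tH \<omega> i)) \<and> 1 \<le> int m + tH \<omega> i"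
      using tH_eventually[OF w i] by blast
    then show ?thesis using i g by (intro exI) (auto simp: sact_apply Xn_iff)
  qed
  moreover have "g \<in> SymX n" using g comp_SymX[OF Hn_SymX[OF w] sact_SymX[OF s]] by simp
  ultimately show "g \<in> Gn_alt n" using s unfolding Gn_alt_def by blast
qed

lemma Gn_alt_subset_Gn: "Gn_alt n \<subseteq> Gn n"
proof
  fix g assume "g \<in> Gn_alt n"
  then obtain \<sigma> where gS: "g \<in> SymX n" and s: "\<sigma> permutes {1..n}"
    and e: "\<forall>i\<in>{1..n}. \<exists>z t. \<forall>m. 1 \<le> m \<and> z \<le> m \<longrightarrow> g (i, m) = (\<sigma> i, nat (int m + t))"
    unfolding Gn_alt_def by blast
  have si: "inv \<sigma> permutes {1..n}" using s by (rule permutes_inv)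
  define \<omega> where "\<omega> = sact n (inv \<sigma>) \<circ> g"
  have "\<omega> \<in> Hn n"
  proof (rule HnI)
    show "\<omega> \<in> SymX n" unfolding \<omega>_def by (rule comp_SymX[OF gS sact_SymX[OF si]])
    fix i assume i: "i \<in> {1..n}"
    then obtain z t where zt: "\<forall>m. 1 \<le> m \<and> z \<le> m \<longrightarrow> g (i, m) = (\<sigma> i, nat (int m + t))" using e by blast
    have "\<omega> (i, m) = (i, nat (int m + t))" if m: "1 \<le> m \<and> z \<le> m" for m
    proof -
      have "g (i, m) \<in> Xn n" using SymX_maps_to[OF gS] i m by (simp add: Xn_iff)
      then show ?thesis using zt m s unfolding \<omega>_def by (simp add: sact_apply permutes_inverses)
    qed
    then show "\<exists>z t. \<forall>m. 1 \<le> m \<and> z \<le> m \<longrightarrow> \<omega> (i, m) = (i, nat (int m + t))" by blast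
  qed
  moreover have "g = gmul \<omega> (sact n \<sigma>)"
    unfolding gmul_def \<omega>_def using sact_inv[OF s] by (simp flip: comp_assoc)
  ultimately show "g \<in> Gn n" using s unfolding Gn_def by blast
qed

lemma Gn_alt_eq_Gn: "Gn_alt n = Gn n"
  using Gn_subset_Gn_alt Gn_alt_subset_Gn by blast

lemma Gn_comp: "g \<in> Gn n \<Longrightarrow> h \<in> Gn n \<Longrightarrow> h \<circ> g \<in> Gn n"
proof -
  assume "g \<in> Gn n" "h \<in> Gn n"
  then obtain \<sigma> \<tau> where gS: "g \<in> SymX n" and s: "\<sigma> permutes {1..n}"
    and eg: "\<forall>i\<in>{1..n}. \<exists>z t. \<forall>m. 1 \<le> m \<and> z \<le> m \<longrightarrow> g (i, m) = (\<sigma> i, nat (int m + t))"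
    and hS: "h \<in> SymX n" and ta: "\<tau> permutes {1..n}"
    and eh: "\<forall>i\<in>{1..n}. \<exists>z t. \<forall>m. 1 \<le> m \<and> z \<le> m \<longrightarrow> h (i, m) = (\<tau> i, nat (int m + t))"
    unfolding Gn_alt_eq_Gn[symmetric] Gn_alt_def by blast
  have "\<exists>z t. \<forall>m. 1 \<le> m \<and> z \<le> m \<longrightarrow> (h \<circ> g) (i, m) = ((\<tau> \<circ> \<sigma>) i, nat (int m + t))"
    if i: "i \<in> {1..n}" for i
  proof -
    obtain z1 t1 where 1: "\<forall>m. 1 \<le> m \<and> z1 \<le> m \<longrightarrow> g (i, m) = (\<sigma> i, nat (int m + t1))"
      using eg i by blast
    obtain z2 t2 where 2: "\<forall>m. 1 \<le> m \<and> z2 \<le> m \<longrightarrow> h (\<sigma> i, m) = (\<tau> (\<sigma> i), nat (int m + t2))"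
      using eh permutes_in_image[OF s] i by blast
    show ?thesis
    proof (intro exI[of _ "z1 + z2 + nat \<bar>t1\<bar> + 1"] exI[of _ "t1 + t2"] allI impI)
      fix m assume m: "1 \<le> m \<and> z1 + z2 + nat \<bar>t1\<bar> + 1 \<le> m"
      then have "1 \<le> nat (int m + t1) \<and> z2 \<le> nat (int m + t1)" by linarith
      then show "(h \<circ> g) (i, m) = ((\<tau> \<circ> \<sigma>) i, nat (int m + (t1 + t2)))"
        using 1 2 m by (auto simp: add.assoc)
    qed
  qed
  then show ?thesis
    unfolding Gn_alt_eq_Gn[symmetric] Gn_alt_def using comp_SymX[OF gS hS] permutes_compose[OF s ta]
    by blast
qed

lemma Gn_ginv: "g \<in> Gn n \<Longrightarrow> ginv n g \<in> Gn n"
proof -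
  assume "g \<in> Gn n"
  then obtain \<sigma> where gS: "g \<in> SymX n" and s: "\<sigma> permutes {1..n}"
    and e: "\<forall>i\<in>{1..n}. \<exists>z t. \<forall>m. 1 \<le> m \<and> z \<le> m \<longrightarrow> g (i, m) = (\<sigma> i, nat (int m + t))"
    unfolding Gn_alt_eq_Gn[symmetric] Gn_alt_def by blast
  have si: "inv \<sigma> permutes {1..n}" using s by (rule permutes_inv)
  have "\<exists>z t. \<forall>m. 1 \<le> m \<and> z \<le> m \<longrightarrow> ginv n g (j, m) = (inv \<sigma> j, nat (int m + t))"
    if j: "j \<in> {1..n}" for j
  proof -
    define i where "i = inv \<sigma> j"
    have i: "i \<in> {1..n}" using permutes_in_image[OF si] j unfolding i_def by blast
    have sij: "\<sigma> i = j" unfolding i_def using s by (simp add: permutes_inverses)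
    obtain z t where zt: "\<forall>m. 1 \<le> m \<and> z \<le> m \<longrightarrow> g (i, m) = (\<sigma> i, nat (int m + t))" using e i by blast
    show ?thesis
    proof (intro exI[of _ "z + nat \<bar>t\<bar> + 1"] exI[of _ "- t"] allI impI)
      fix m' assume m': "1 \<le> m' \<and> z + nat \<bar>t\<bar> + 1 \<le> m'"
      define m where "m = nat (int m' - t)"
      have "int m = int m' - t" "1 \<le> m \<and> z \<le> m" using m' unfolding m_def by linarith+
      then have "g (i, m) = (j, m')" using zt sij by simp
      moreover have "ginv n g (g (i, m)) = (i, m)"
        using ginv_comp_self[OF gS] by (metis comp_apply id_apply)
      ultimately show "ginv n g (j, m') = (inv \<sigma> j, nat (int m' + - t))" using m_def i_def by simp
    qed
  qed
  then show ?thesis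
    unfolding Gn_alt_eq_Gn[symmetric] Gn_alt_def using ginv_SymX[OF gS] si by blast
qed

lemma Gn_id: "id \<in> Gn n"
  unfolding Gn_alt_eq_Gn[symmetric] Gn_alt_def by (auto intro!: exI[of _ id] exI[of _ 0] permutes_id)

lemma Hn_subset_Gn: "Hn n \<subseteq> Gn n"
proof
  fix g assume "g \<in> Hn n"
  moreover have "g = gmul g (sact n id)" by (auto simp: gmul_def sact_def)
  ultimately show "g \<in> Gn n" unfolding Gn_def using permutes_id by blast
qed

lemma sigma_of_permutes: "g \<in> Gn n \<Longrightarrow> sigma_of n g permutes {1..n}"
proof -
  assume g: "g \<in> Gn n"
  let ?P = "\<lambda>\<sigma>. \<sigma> permutes {1..n} \<and> (\<exists>\<omega> \<in> Hn n. g = gmul \<omega> (sact n \<sigma>))"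
  have "\<sigma>1 i = \<sigma>2 i" if 1: "?P \<sigma>1" and 2: "?P \<sigma>2" for \<sigma>1 \<sigma>2 i
  proof (cases "i \<in> {1..n}")
    case True
    obtain \<omega>1 \<omega>2 where w: "\<omega>1 \<in> Hn n" "g = sact n \<sigma>1 \<circ> \<omega>1" "\<omega>2 \<in> Hn n" "g = sact n \<sigma>2 \<circ> \<omega>2"
      using 1 2 by (auto simp: gmul_def)
    obtain z1 where z1: "\<forall>m. z1 \<le> m \<longrightarrow> \<omega>1 (i, m) = (i, nat (int m + tH \<omega>1 i)) \<and> 1 \<le> int m + tH \<omega>1 i"
      using tH_eventually[OF w(1) True] by blast
    obtain z2 where z2: "\<forall>m. z2 \<le> m \<longrightarrow> \<omega>2 (i, m) = (i, nat (int m + tH \<omega>2 i)) \<and> 1 \<le> int m + tH \<omega>2 i"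
      using tH_eventually[OF w(3) True] by blast
    have "g (i, z1 + z2) = (\<sigma>1 i, nat (int (z1 + z2) + tH \<omega>1 i))"
      using w(2) z1[rule_format, of "z1 + z2"] True by (simp add: sact_def Xn_iff le_nat_iff)
    moreover have "g (i, z1 + z2) = (\<sigma>2 i, nat (int (z1 + z2) + tH \<omega>2 i))"
      using w(4) z2[rule_format, of "z1 + z2"] True by (simp add: sact_def Xn_iff le_nat_iff)
    ultimately show ?thesis by simp
  qed (use 1 2 permutes_not_in in metis)
  then have "\<exists>!\<sigma>. ?P \<sigma>" using g unfolding Gn_def by blast
  then have "?P (sigma_of n g)" unfolding sigma_of_def by (rule theI')
  then show ?thesis by blast
qed

lemma perm_order_pos: "\<sigma> permutes {1..n} \<Longrightarrow> 0 < perm_order \<sigma>"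
  unfolding perm_order_def
  by (metis (mono_tags, lifting) LeastI finite_atLeastAtMost permutation_is_nilpotent
      permutes_imp_permutation)

lemma foldl_gmul_eq:
  "foldl (\<lambda>acc (k, b). gmul acc (L k b)) x v = foldl (\<lambda>acc (k, b). gmul acc (L k b)) id v \<circ> x"
proof (induction v arbitrary: x)
  case (Cons a v)
  obtain k b where a: "a = (k, b)" by fastforce
  have "foldl (\<lambda>acc (k, b). gmul acc (L k b)) x (a # v) =
      foldl (\<lambda>acc (k, b). gmul acc (L k b)) (L k b \<circ> x) v"
    by (simp add: a gmul_def)
  also have "\<dots> = foldl (\<lambda>acc (k, b). gmul acc (L k b)) id v \<circ> L k b \<circ> x"
    by (subst Cons.IH) (simp add: comp_assoc)
  also have "foldl (\<lambda>acc (k, b). gmul acc (L k b)) id v \<circ> L k b =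
      foldl (\<lambda>acc (k, b). gmul acc (L k b)) (L k b) v"
    by (rule Cons.IH[symmetric])
  also have "\<dots> = foldl (\<lambda>acc (k, b). gmul acc (L k b)) id (a # v)"
    by (simp add: a gmul_def)
  finally show ?case .
qed simp

lemma word_eval_append: "word_eval n gens (u @ v) = word_eval n gens v \<circ> word_eval n gens u"
  unfolding word_eval_def foldl_append by (rule foldl_gmul_eq)

lemma word_eval_Nil [simp]: "word_eval n gens [] = id"
  by (simp add: word_eval_def)

lemma valid_word_Nil [simp]: "valid_word gens []"
  by (simp add: valid_word_def)

lemma valid_word_append [simp]: "valid_word gens (u @ v) \<longleftrightarrow> valid_word gens u \<and> valid_word gens v"
  unfolding valid_word_def by auto

lemma word_eval_replicate: "word_eval n gens (concat (replicate k v)) = word_eval n gens v ^^ k"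
proof (induction k)
  case (Suc k)
  then show ?case by (simp add: word_eval_append funpow_Suc_right del: funpow.simps)
qed (simp add: id_def)

lemma valid_word_replicate: "valid_word gens v \<Longrightarrow> valid_word gens (concat (replicate k v))"
  by (induction k) simp_all

lemma word_eval_Gn: "set gens \<subseteq> Gn n \<Longrightarrow> valid_word gens w \<Longrightarrow> word_eval n gens w \<in> Gn n"
proof (induction w rule: rev_induct)
  case (snoc l w)
  obtain k b where l: "l = (k, b)" by fastforce
  then have "valid_word gens w" "gens ! k \<in> Gn n" using snoc.prems by (auto simp: valid_word_def)
  then have "word_eval n gens [l] \<in> Gn n" using l by (simp add: word_eval_def gmul_def Gn_ginv)
  moreover have "word_eval n gens w \<in> Gn n" using snoc \<open>valid_word gens w\<close> by blast
  ultimately show ?case unfolding word_eval_append by (rule Gn_comp[rotated])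
qed (simp add: Gn_id)

definition yshift :: "nat \<Rightarrow> perm" where
  "yshift j = (\<lambda>(i, m). if i = 1 \<and> 1 \<le> m then (1, m + 1)
                    else if i = j \<and> m = 1 then (1, 1)
                    else if i = j \<and> 2 \<le> m then (j, m - 1) else (i, m))"

lemma yshift_SymX: "2 \<le> j \<Longrightarrow> j \<le> n \<Longrightarrow> yshift j \<in> SymX n"
proof -
  assume j: "2 \<le> j" "j \<le> n"
  define y' where "y' = (\<lambda>(i, m). if i = 1 \<and> m = 1 then (j, 1)
                    else if i = 1 \<and> 2 \<le> m then (1, m - 1)
                    else if i = j \<and> 1 \<le> m then (j, m + 1) else (i, (m::nat)))"
  have "bij_betw (yshift j) (Xn n) (Xn n)"
    by (rule bij_betw_byWitness[where f' = y'])
      (use j in \<open>auto simp: yshift_def y'_def Xn_def split: if_splits\<close>)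
  moreover have "\<forall>p. p \<notin> Xn n \<longrightarrow> yshift j p = p" using j by (auto simp: yshift_def Xn_def)
  ultimately show ?thesis by (simp add: SymX_def)
qed

lemma yshift_translates:
  "2 \<le> j \<Longrightarrow> \<forall>m. 1 \<le> m \<and> 2 \<le> m \<longrightarrow>
     yshift j (i, m) = (i, nat (int m + (if i = 1 then 1 else if i = j then -1 else 0)))"
  by (auto simp: yshift_def nat_add_distrib)

lemma yshift_Hn: "2 \<le> j \<Longrightarrow> j \<le> n \<Longrightarrow> yshift j \<in> Hn n"
  by (rule HnI[OF yshift_SymX]) (use yshift_translates in blast)+

lemma tH_yshift: "2 \<le> j \<Longrightarrow> tH (yshift j) i = (if i = 1 then 1 else if i = j then -1 else 0)"
  by (rule tH_eqI[OF yshift_translates])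

lemma sum_tH_mult_tH_yshift:
  assumes z: "z \<in> Hn n" and i: "i \<in> {1..n}"
  shows "(\<Sum>j\<in>{2..n}. tH z j * tH (yshift j) i) + tH z i = 0"
proof (cases "i = 1")
  case True
  have "(\<Sum>j\<in>{2..n}. tH z j * tH (yshift j) i) = (\<Sum>j\<in>{2..n}. tH z j)"
    using True by (intro sum.cong) (auto simp: tH_yshift)
  moreover have "{1..n} = insert 1 {2..n}" using i by auto
  ultimately show ?thesis using sum_tH_eq_0[OF z] True by simp
next
  case False
  then have "(\<Sum>j\<in>{2..n}. tH z j * tH (yshift j) i) = (\<Sum>j\<in>{2..n}. if j = i then - tH z j else 0)"
    by (intro sum.cong) (auto simp: tH_yshift)
  also have "\<dots> = - tH z i" using i False by (simp add: sum.delta')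
  finally show ?thesis by simp
qed

definition conjugate :: "nat \<Rightarrow> perm \<Rightarrow> perm \<Rightarrow> perm" where
  "conjugate n g x = gmul (gmul (ginv n x) g) x"

definition conjugate_in :: "nat \<Rightarrow> perm set \<Rightarrow> perm \<Rightarrow> perm \<Rightarrow> bool" where
  "conjugate_in n X g h \<longleftrightarrow> (\<exists>x\<in>X. conjugate n g x = h)"

lemma conjugate_eq: "conjugate n g x = x \<circ> g \<circ> ginv n x"
  by (simp add: conjugate_def gmul_def comp_assoc)

lemma conjugate_id: "conjugate n g id = g"
  by (simp add: conjugate_eq ginv_id)

lemma conjugate_conjugate:
  "x \<in> SymX n \<Longrightarrow> y \<in> SymX n \<Longrightarrow> conjugate n (conjugate n g x) y = conjugate n g (y \<circ> x)"
  by (simp add: conjugate_eq ginv_comp comp_assoc)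

lemma conjugate_ginv: "y \<in> SymX n \<Longrightarrow> conjugate n (conjugate n g y) (ginv n y) = g"
  by (simp add: conjugate_conjugate ginv_SymX ginv_comp_self conjugate_id)

lemma conjugate_eq_self_iff: "e \<in> SymX n \<Longrightarrow> conjugate n g e = g \<longleftrightarrow> e \<circ> g = g \<circ> e"
proof
  assume e: "e \<in> SymX n" and "conjugate n g e = g"
  then have "e \<circ> g \<circ> ginv n e \<circ> e = g \<circ> e" by (simp add: conjugate_eq)
  then show "e \<circ> g = g \<circ> e" by (simp add: comp_assoc ginv_comp_self[OF e])
next
  assume e: "e \<in> SymX n" and "e \<circ> g = g \<circ> e"
  then show "conjugate n g e = g" by (simp add: conjugate_eq comp_ginv_self comp_assoc)
qed

lemma commute_if_conjugate_eq:
  assumes x: "x \<in> SymX n" and y: "y \<in> SymX n" and xy: "conjugate n g x = conjugate n g y"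
  shows "(ginv n y \<circ> x) \<circ> g = g \<circ> (ginv n y \<circ> x)"
proof -
  have "conjugate n g (ginv n y \<circ> x) = conjugate n (conjugate n g x) (ginv n y)"
    using x y by (simp add: conjugate_conjugate ginv_SymX)
  also have "\<dots> = g" unfolding xy by (rule conjugate_ginv[OF y])
  finally show ?thesis using x y by (simp add: conjugate_eq_self_iff comp_SymX ginv_SymX)
qed

lemma conjugate_comp_centralizing:
  assumes "Y \<in> SymX n" "z \<in> SymX n" "E \<in> SymX n" "E \<circ> g = g \<circ> E"
  shows "conjugate n g (Y \<circ> z \<circ> E) = conjugate n (conjugate n g z) Y"
proof -
  have "conjugate n g (Y \<circ> z \<circ> E) = conjugate n (conjugate n g E) (Y \<circ> z)"
    using assms by (simp add: conjugate_conjugate comp_SymX)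
  also have "\<dots> = conjugate n (conjugate n g z) Y"
    using assms conjugate_eq_self_iff[of E n g] by (simp add: conjugate_conjugate)
  finally show ?thesis .
qed

definition ipow :: "nat \<Rightarrow> perm \<Rightarrow> int \<Rightarrow> perm" where
  "ipow n e k = (if 0 \<le> k then e ^^ nat k else ginv n e ^^ nat (- k))"

lemma Hn_ipow: "e \<in> Hn n \<Longrightarrow> ipow n e k \<in> Hn n"
  by (simp add: ipow_def Hn_funpow Hn_ginv)

lemma tH_ipow: "e \<in> Hn n \<Longrightarrow> i \<in> {1..n} \<Longrightarrow> tH (ipow n e k) i = k * tH e i"
proof (cases "0 \<le> k")
  case False
  assume e: "e \<in> Hn n" and i: "i \<in> {1..n}"
  then show ?thesis
    using False tH_funpow[OF Hn_ginv[OF e] i, of "nat (- k)"] tH_ginv[OF e i] by (simp add: ipow_def)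
qed (simp add: ipow_def tH_funpow)

lemma funpow_commute: "e \<circ> g = g \<circ> e \<Longrightarrow> e ^^ k \<circ> g = g \<circ> e ^^ k"
  by (induction k) (simp_all add: comp_assoc, metis comp_assoc)

lemma ipow_commute: "e \<in> SymX n \<Longrightarrow> e \<circ> g = g \<circ> e \<Longrightarrow> ipow n e k \<circ> g = g \<circ> ipow n e k"
proof -
  assume e: "e \<in> SymX n" and eg: "e \<circ> g = g \<circ> e"
  have "conjugate n g (ginv n e) = g"
    using e eg conjugate_ginv[OF e, of g] by (simp add: conjugate_eq_self_iff[OF e, symmetric])
  then have "ginv n e \<circ> g = g \<circ> ginv n e" using e by (simp add: conjugate_eq_self_iff ginv_SymX)
  then show ?thesis using eg by (simp add: ipow_def funpow_commute)
qed

primrec ipow_prod :: "nat \<Rightarrow> (nat \<Rightarrow> perm) \<Rightarrow> (nat \<Rightarrow> int) \<Rightarrow> nat list \<Rightarrow> perm" where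
  "ipow_prod n e k [] = id"
| "ipow_prod n e k (j # js) = ipow n (e j) (k j) \<circ> ipow_prod n e k js"

lemma Hn_ipow_prod: "\<forall>j\<in>set js. e j \<in> Hn n \<Longrightarrow> ipow_prod n e k js \<in> Hn n"
  by (induction js) (simp_all add: Hn_id Hn_comp Hn_ipow)

lemma tH_ipow_prod: "\<forall>j\<in>set js. e j \<in> Hn n \<Longrightarrow> i \<in> {1..n} \<Longrightarrow>
   tH (ipow_prod n e k js) i = (\<Sum>j\<leftarrow>js. k j * tH (e j) i)"
proof (induction js)
  case (Cons j js)
  then have "e j \<in> Hn n" "\<forall>j\<in>set js. e j \<in> Hn n" by simp_all
  then have "tH (ipow_prod n e k (j # js)) i = (\<Sum>j\<leftarrow>js. k j * tH (e j) i) + k j * tH (e j) i"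
    using tH_comp[OF Hn_ipow_prod Hn_ipow Cons.prems(2)] Cons tH_ipow by simp
  then show ?case by (simp only: list.map sum_list.Cons add.commute)
qed (simp add: tH_id)

lemma ipow_prod_commute: "\<forall>j\<in>set js. e j \<in> SymX n \<and> e j \<circ> g = g \<circ> e j \<Longrightarrow>
   ipow_prod n e k js \<circ> g = g \<circ> ipow_prod n e k js"
proof (induction js)
  case (Cons j js)
  have "e j \<in> SymX n \<and> e j \<circ> g = g \<circ> e j" by (rule bspec[OF Cons.prems]) simp
  then have "ipow n (e j) (k j) \<circ> g = g \<circ> ipow n (e j) (k j)" by (blast intro: ipow_commute)
  moreover have "ipow_prod n e k js \<circ> g = g \<circ> ipow_prod n e k js"
    by (rule Cons.IH) (use Cons.prems in auto)
  ultimately show ?case by (simp only: ipow_prod.simps comp_assoc) (simp only: comp_assoc[symmetric])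
qed simp

lemma Hstar_subset_Hn: "Hstar n g \<subseteq> Hn n"
  by (auto simp: Hstar_def)

lemma Hstar_if_tH_combination:
  assumes "x \<in> Hn n" "\<forall>j\<in>J. c j \<in> Hstar n g"
    and "\<forall>i\<in>{1..n}. tH x i = (\<Sum>j\<in>J. k j * tH (c j) i)"
  shows "x \<in> Hstar n g"
  using assms unfolding Hstar_def Iset_def by (auto intro!: dvd_sum dvd_mult)

text \<open>The base-M digits of c, read along js, are the exponents.\<close>

fun yshift_prod :: "nat list \<Rightarrow> nat \<Rightarrow> nat \<Rightarrow> perm" where
  "yshift_prod [] M c = id"
| "yshift_prod (j # js) M c = yshift_prod js M (c div M) \<circ> yshift j ^^ (c mod M)"

primrec from_digits :: "nat list \<Rightarrow> nat \<Rightarrow> nat" where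
  "from_digits [] M = 0"
| "from_digits (a # as) M = a + M * from_digits as M"

lemma from_digits_less: "\<forall>a\<in>set as. a < M \<Longrightarrow> from_digits as M < M ^ length as"
proof (induction as)
  case (Cons a as)
  then have "from_digits as M + 1 \<le> M ^ length as" "a + 1 \<le> M" by auto
  then have "a + M * from_digits as M + 1 \<le> M + M * from_digits as M" by simp
  also have "\<dots> = M * (from_digits as M + 1)" by simp
  also have "\<dots> \<le> M * M ^ length as" using \<open>from_digits as M + 1 \<le> M ^ length as\<close> by (rule mult_le_mono2)
  finally show ?case by simp
qed simp

lemma Hn_yshift_prod: "set js \<subseteq> {2..n} \<Longrightarrow> yshift_prod js M c \<in> Hn n"
  by (induction js arbitrary: c) (simp_all add: Hn_id Hn_comp Hn_funpow yshift_Hn)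

lemma tH_yshift_prod:
  assumes "set js \<subseteq> {2..n}" "\<forall>j\<in>set js. a j < M" "i \<in> {1..n}"
  shows "tH (yshift_prod js M (from_digits (map a js) M)) i = (\<Sum>j\<leftarrow>js. int (a j) * tH (yshift j) i)"
  using assms
proof (induction js)
  case (Cons j js)
  then have j: "yshift j \<in> Hn n" by (simp add: yshift_Hn)
  have prod: "yshift_prod (j # js) M (from_digits (map a (j # js)) M) =
      yshift_prod js M (from_digits (map a js) M) \<circ> yshift j ^^ a j"
    using Cons.prems by simp
  have "tH (yshift_prod js M (from_digits (map a js) M) \<circ> yshift j ^^ a j) i =
      tH (yshift j ^^ a j) i + tH (yshift_prod js M (from_digits (map a js) M)) i"
    using Cons.prems by (intro tH_comp[where n = n] Hn_funpow j Hn_yshift_prod) simp_all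
  also have "\<dots> = int (a j) * tH (yshift j) i + (\<Sum>j\<leftarrow>js. int (a j) * tH (yshift j) i)"
    using Cons tH_funpow[OF j] by simp
  finally show ?case unfolding prod by (simp only: list.map sum_list.Cons)
qed (simp add: tH_id)

section \<open>Reduction of H_n-conjugacy to H_n*-conjugacy\<close>

lemma exists_yshift_power_in_Hstar:
  assumes g: "g \<in> Gn n"
  obtains M where "0 < M" "\<And>j. j \<in> {2..n} \<Longrightarrow> yshift j ^^ M \<in> Hstar n g"
proof
  let ?D = "\<lambda>i. \<bar>int (perm_order (sigma_of n g)) * t_orb n g i\<bar>"
  define M where "M = (\<Prod>i\<in>Iset n g. nat (?D i))"
  have D: "0 < ?D i" if "i \<in> Iset n g" for i
    using that perm_order_pos[OF sigma_of_permutes[OF g]] unfolding Iset_def by auto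
  then show "0 < M" unfolding M_def by (intro prod_pos) auto
  have "int M = (\<Prod>i\<in>Iset n g. ?D i)" unfolding M_def by (simp add: of_nat_prod)
  moreover have "finite (Iset n g)" by (simp add: Iset_def)
  ultimately have "?D i dvd int M" if "i \<in> Iset n g" for i
    using dvd_prodI[of "Iset n g" i ?D] that by simp
  show "yshift j ^^ M \<in> Hstar n g" if "j \<in> {2..n}" for j
  proof -
    have y: "yshift j \<in> Hn n" using that by (simp add: yshift_Hn)
    have "?D i dvd tH (yshift j ^^ M) i" if "i \<in> Iset n g" for i
      using that \<open>\<And>i. i \<in> Iset n g \<Longrightarrow> ?D i dvd int M\<close>[OF that] tH_funpow[OF y, of i M]
      by (simp add: Iset_def)
    then show ?thesis by (simp add: Hstar_def Hn_funpow[OF y])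
  qed
qed

lemma yshift_power_corrector:
  assumes j: "j \<in> {2..n}" and c: "c \<in> Hn n"
    and conj: "conjugate n g c = conjugate n g (yshift j ^^ M)"
  shows "ginv n (yshift j ^^ M) \<circ> c \<in> Hn n"
    and "(ginv n (yshift j ^^ M) \<circ> c) \<circ> g = g \<circ> (ginv n (yshift j ^^ M) \<circ> c)"
    and "i \<in> {1..n} \<Longrightarrow> tH (ginv n (yshift j ^^ M) \<circ> c) i = tH c i - int M * tH (yshift j) i"
proof -
  have y: "yshift j \<in> Hn n" using j by (simp add: yshift_Hn)
  then show "ginv n (yshift j ^^ M) \<circ> c \<in> Hn n" using c by (simp add: Hn_comp Hn_ginv Hn_funpow)
  show "(ginv n (yshift j ^^ M) \<circ> c) \<circ> g = g \<circ> (ginv n (yshift j ^^ M) \<circ> c)"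
    using conj by (intro commute_if_conjugate_eq Hn_SymX c Hn_funpow y)
  assume i: "i \<in> {1..n}"
  then show "tH (ginv n (yshift j ^^ M) \<circ> c) i = tH c i - int M * tH (yshift j) i"
    using tH_comp[OF c Hn_ginv[OF Hn_funpow[OF y]] i] tH_ginv[OF Hn_funpow[OF y] i] tH_funpow[OF y i]
    by simp
qed

lemma tH_yshift_prod_comp_ipow_prod:
  assumes js: "set js = {2..n}" "distinct js" and z: "z \<in> Hn n"
    and e: "\<forall>j\<in>{2..n}. e j \<in> Hn n" and a: "\<forall>j\<in>{2..n}. a j < M" and i: "i \<in> {1..n}"
  shows "tH (yshift_prod js M (from_digits (map a js) M) \<circ> z \<circ> ipow_prod n e k js) i =
    (\<Sum>j\<in>{2..n}. k j * tH (e j) i + int (a j) * tH (yshift j) i) + tH z i"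
proof -
  let ?Y = "yshift_prod js M (from_digits (map a js) M)" and ?E = "ipow_prod n e k js"
  have Y: "?Y \<in> Hn n" using js by (intro Hn_yshift_prod) simp
  have E: "?E \<in> Hn n" using e js by (intro Hn_ipow_prod) simp
  have "tH ?E i = (\<Sum>j\<in>{2..n}. k j * tH (e j) i)"
    using tH_ipow_prod[of js e n i k] e i by (simp add: sum_list_distinct_conv_sum_set js)
  moreover have "tH ?Y i = (\<Sum>j\<in>{2..n}. int (a j) * tH (yshift j) i)"
    using tH_yshift_prod[of js n a M i] a i by (simp add: sum_list_distinct_conv_sum_set js)
  moreover have "tH (?Y \<circ> z \<circ> ?E) i = tH ?E i + (tH z i + tH ?Y i)"
    using tH_comp[OF E Hn_comp[OF z Y] i] tH_comp[OF z Y i] by simp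
  ultimately show ?thesis by (simp add: sum.distrib)
qed

lemma tH_corrected_conjugator:
  assumes js: "set js = {2..n}" "distinct js" and z: "z \<in> Hn n"
    and e: "\<forall>j\<in>{2..n}. e j \<in> Hn n \<and> (\<forall>i\<in>{1..n}. tH (e j) i = tH (c j) i - int M * tH (yshift j) i)"
    and a: "\<forall>j\<in>{2..n}. a j < M" and ak: "\<And>j. int (a j) - int M * k j = tH z j"
    and i: "i \<in> {1..n}"
  shows "tH (yshift_prod js M (from_digits (map a js) M) \<circ> z \<circ> ipow_prod n e k js) i =
    (\<Sum>j\<in>{2..n}. k j * tH (c j) i)"
proof -
  have "tH (yshift_prod js M (from_digits (map a js) M) \<circ> z \<circ> ipow_prod n e k js) i =
      (\<Sum>j\<in>{2..n}. k j * tH (e j) i + int (a j) * tH (yshift j) i) + tH z i"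
    using e a by (intro tH_yshift_prod_comp_ipow_prod js z i) auto
  also have "\<dots> = (\<Sum>j\<in>{2..n}. k j * (tH (c j) i - int M * tH (yshift j) i) +
      int (a j) * tH (yshift j) i) + tH z i"
    using e i by (intro arg_cong[where f = "\<lambda>s. s + tH z i"] sum.cong) auto
  also have "\<dots> = (\<Sum>j\<in>{2..n}. k j * tH (c j) i) +
      ((\<Sum>j\<in>{2..n}. (int (a j) - int M * k j) * tH (yshift j) i) + tH z i)"
    by (simp add: algebra_simps sum.distrib sum_subtractf)
  also have "\<dots> = (\<Sum>j\<in>{2..n}. k j * tH (c j) i)"
    unfolding ak using sum_tH_mult_tH_yshift[OF z i] by simp
  finally show ?thesis .
qed

lemma conjugate_Hn_imp_shifted_conjugate_Hstar:
  assumes n: "2 \<le> n" and M: "0 < M"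
    and shifts: "\<forall>j\<in>{2..n}. conjugate_in n (Hstar n g) g (conjugate n g (yshift j ^^ M))"
    and z: "z \<in> Hn n"
  shows "\<exists>c < M ^ (n - 1). conjugate_in n (Hstar n g) g
           (conjugate n (conjugate n g z) (yshift_prod [2..<Suc n] M c))"
proof -
  define js where "js = [2..<Suc n]"
  have js: "set js = {2..n}" "distinct js" "length js = n - 1" unfolding js_def by auto
  have "\<forall>j\<in>{2..n}. \<exists>c. c \<in> Hstar n g \<and> conjugate n g c = conjugate n g (yshift j ^^ M)"
    using shifts unfolding conjugate_in_def by blast
  then obtain c where c: "\<forall>j\<in>{2..n}. c j \<in> Hstar n g \<and> conjugate n g (c j) = conjugate n g (yshift j ^^ M)"
    by (rule bchoice[THEN exE])
  then have cH: "\<forall>j\<in>{2..n}. c j \<in> Hn n" using Hstar_subset_Hn by blast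
  define e where "e j = ginv n (yshift j ^^ M) \<circ> c j" for j
  have e: "\<forall>j\<in>{2..n}. e j \<in> Hn n \<and> e j \<circ> g = g \<circ> e j \<and>
      (\<forall>i\<in>{1..n}. tH (e j) i = tH (c j) i - int M * tH (yshift j) i)"
    unfolding e_def using yshift_power_corrector cH c by blast
  define a where "a j = nat (tH z j mod int M)" for j
  define k where "k j = (int (a j) - tH z j) div int M" for j
  have aM: "a j < M" for j unfolding a_def using M by (simp add: nat_less_iff)
  have ak: "int (a j) - int M * k j = tH z j" for j
  proof -
    have "int (a j) = tH z j mod int M" unfolding a_def using M by simp
    then have "int M dvd int (a j) - tH z j" by (simp add: mod_eq_dvd_iff[symmetric])
    then show ?thesis unfolding k_def by simp
  qed
  define Y where "Y = yshift_prod js M (from_digits (map a js) M)"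
  define x where "x = Y \<circ> z \<circ> ipow_prod n e k js"
  have "conjugate n g x = conjugate n (conjugate n g z) Y"
    unfolding x_def Y_def using e js z
    by (intro conjugate_comp_centralizing Hn_SymX Hn_yshift_prod Hn_ipow_prod ipow_prod_commute)
      (auto simp: Hn_SymX)
  moreover have "x \<in> Hstar n g"
  proof (rule Hstar_if_tH_combination)
    show "x \<in> Hn n" unfolding x_def Y_def using e js z by (intro Hn_comp Hn_yshift_prod Hn_ipow_prod) auto
    show "\<forall>j\<in>{2..n}. c j \<in> Hstar n g" using c by blast
    show "\<forall>i\<in>{1..n}. tH x i = (\<Sum>j\<in>{2..n}. k j * tH (c j) i)"
      unfolding x_def Y_def using e aM by (intro ballI tH_corrected_conjugator js(1,2) z ak) auto
  qed
  moreover have "from_digits (map a js) M < M ^ (n - 1)"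
    using from_digits_less[of "map a js" M] aM js by simp
  ultimately show ?thesis unfolding conjugate_in_def Y_def js_def by blast
qed

lemma conjugate_Hn_if_shifted_conjugate_Hstar:
  assumes Y: "Y \<in> Hn n" and conj: "conjugate_in n (Hstar n g) g (conjugate n h Y)"
  shows "conjugate_in n (Hn n) g h"
proof -
  obtain x where x: "x \<in> Hn n" "conjugate n g x = conjugate n h Y"
    using conj Hstar_subset_Hn unfolding conjugate_in_def by blast
  have "conjugate n g (ginv n Y \<circ> x) = conjugate n (conjugate n g x) (ginv n Y)"
    using x Y by (intro conjugate_conjugate[symmetric] Hn_SymX Hn_ginv)
  also have "\<dots> = h" unfolding x(2) by (rule conjugate_ginv[OF Hn_SymX[OF Y]])
  finally show ?thesis unfolding conjugate_in_def using x Y by (blast intro: Hn_comp Hn_ginv)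
qed

definition conj_words :: "nat \<Rightarrow> perm list \<Rightarrow> (perm \<Rightarrow> perm set) \<Rightarrow> letter list \<Rightarrow> letter list \<Rightarrow> bool" where
  "conj_words n gens X w1 w2 \<longleftrightarrow> valid_word gens w1 \<and> valid_word gens w2 \<and>
     conjugate_in n (X (word_eval n gens w1)) (word_eval n gens w1) (word_eval n gens w2)"

lemma conj_words_Hstar_self: "conj_words n gens (Hstar n) w w \<longleftrightarrow> valid_word gens w"
proof -
  have "id \<in> Hstar n g" for g by (simp add: Hstar_def Hn_id tH_id)
  then show ?thesis unfolding conj_words_def conjugate_in_def using conjugate_id by blast
qed

lemma word_eval_conj:
  "word_eval n gens ui = ginv n (word_eval n gens u) \<Longrightarrow>
   word_eval n gens (ui @ w @ u) = conjugate n (word_eval n gens w) (word_eval n gens u)"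
  by (simp add: word_eval_append conjugate_eq comp_assoc)

fun power_word :: "(nat \<Rightarrow> letter list) \<Rightarrow> nat list \<Rightarrow> nat \<Rightarrow> nat \<Rightarrow> letter list" where
  "power_word u [] M c = []"
| "power_word u (j # js) M c = concat (replicate (c mod M) (u j)) @ power_word u js M (c div M)"

fun power_word_inv :: "(nat \<Rightarrow> letter list) \<Rightarrow> nat list \<Rightarrow> nat \<Rightarrow> nat \<Rightarrow> letter list" where
  "power_word_inv u [] M c = []"
| "power_word_inv u (j # js) M c = power_word_inv u js M (c div M) @ concat (replicate (c mod M) (u j))"

lemma valid_power_word: "\<forall>j\<in>set js. valid_word gens (u j) \<Longrightarrow> valid_word gens (power_word u js M c)"
  by (induction js arbitrary: c) (simp_all add: valid_word_replicate)

lemma valid_power_word_inv: "\<forall>j\<in>set js. valid_word gens (u j) \<Longrightarrow> valid_word gens (power_word_inv u js M c)"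
  by (induction js arbitrary: c) (simp_all add: valid_word_replicate)

lemma word_eval_power_word:
  "\<forall>j\<in>set js. word_eval n gens (u j) = yshift j \<Longrightarrow> word_eval n gens (power_word u js M c) = yshift_prod js M c"
  by (induction js arbitrary: c) (simp_all add: word_eval_append word_eval_replicate)

lemma word_eval_power_word_inv:
  assumes "set js \<subseteq> {2..n}" "\<forall>j\<in>set js. word_eval n gens (u j) = ginv n (yshift j)"
  shows "word_eval n gens (power_word_inv u js M c) = ginv n (yshift_prod js M c)"
  using assms
proof (induction js arbitrary: c)
  case (Cons j js)
  then have P: "yshift_prod js M (c div M) \<in> SymX n" and y: "yshift j \<in> SymX n"
    and uj: "word_eval n gens (u j) = ginv n (yshift j)"
    by (simp_all add: Hn_SymX Hn_yshift_prod yshift_SymX)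
  have "word_eval n gens (power_word_inv u (j # js) M c) =
      ginv n (yshift j) ^^ (c mod M) \<circ> ginv n (yshift_prod js M (c div M))"
    using Cons by (simp only: power_word_inv.simps word_eval_append word_eval_replicate uj) simp
  also have "\<dots> = ginv n (yshift_prod (j # js) M c)"
    by (simp only: yshift_prod.simps ginv_comp[OF SymX_funpow[OF y] P] ginv_funpow[OF y])
  finally show ?case .
qed (simp add: ginv_id)

lemma computable_enc_power_word:
  "computable (Suc (Suc 0)) (\<lambda>xs. enc_word (power_word u js (Suc (xs ! 1)) (xs ! 0)))"
proof (induction js)
  case (Cons j js)
  have "computable (Suc (Suc 0)) (\<lambda>xs. code_append
      (enc_word (concat (replicate (xs ! 0 mod Suc (xs ! 1)) (u j))))
      ((\<lambda>xs. enc_word (power_word u js (Suc (xs ! 1)) (xs ! 0))) [xs ! 0 div Suc (xs ! 1), xs ! 1]))"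
    by (intro computable_code_append computable_enc_word_replicate computable_mod_Suc
        computable_comp2[OF Cons] computable_div_Suc computable_nth0 computable_nth1)
  then show ?case by (simp add: enc_word_append)
qed (simp add: enc_word_def computable_const)

lemma computable_enc_power_word_inv:
  "computable (Suc (Suc 0)) (\<lambda>xs. enc_word (power_word_inv u js (Suc (xs ! 1)) (xs ! 0)))"
proof (induction js)
  case (Cons j js)
  have "computable (Suc (Suc 0)) (\<lambda>xs. code_append
      ((\<lambda>xs. enc_word (power_word_inv u js (Suc (xs ! 1)) (xs ! 0))) [xs ! 0 div Suc (xs ! 1), xs ! 1])
      (enc_word (concat (replicate (xs ! 0 mod Suc (xs ! 1)) (u j)))))"
    by (intro computable_code_append computable_enc_word_replicate computable_mod_Suc
        computable_comp2[OF Cons] computable_div_Suc computable_nth0 computable_nth1)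
  then show ?case by (simp add: enc_word_append)
qed (simp add: enc_word_def computable_const)

definition yshift_words :: "nat \<Rightarrow> perm list \<Rightarrow> (nat \<Rightarrow> letter list) \<Rightarrow> (nat \<Rightarrow> letter list) \<Rightarrow> bool" where
  "yshift_words n gens u ui \<longleftrightarrow> (\<forall>j\<in>{2..n}.
     valid_word gens (u j) \<and> word_eval n gens (u j) = yshift j \<and>
     valid_word gens (ui j) \<and> word_eval n gens (ui j) = ginv n (yshift j))"

lemma exists_yshift_words:
  assumes "generating_list n gens"
  obtains u ui where "yshift_words n gens u ui"
proof -
  have "\<forall>j\<in>{2..n}. \<exists>w. valid_word gens (fst w) \<and> word_eval n gens (fst w) = yshift j \<and>
      valid_word gens (snd w) \<and> word_eval n gens (snd w) = ginv n (yshift j)"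
  proof
    fix j assume "j \<in> {2..n}"
    then have "yshift j \<in> Gn n" "ginv n (yshift j) \<in> Gn n"
      using Hn_subset_Gn by (auto intro: yshift_Hn Hn_ginv)
    then obtain v vi where "valid_word gens v" "word_eval n gens v = yshift j"
      "valid_word gens vi" "word_eval n gens vi = ginv n (yshift j)"
      using assms unfolding generating_list_def by meson
    then show "\<exists>w. valid_word gens (fst w) \<and> word_eval n gens (fst w) = yshift j \<and>
        valid_word gens (snd w) \<and> word_eval n gens (snd w) = ginv n (yshift j)"
      by (intro exI[of _ "(v, vi)"]) simp
  qed
  then obtain w where "\<forall>j\<in>{2..n}. valid_word gens (fst (w j)) \<and> word_eval n gens (fst (w j)) = yshift j \<and>
      valid_word gens (snd (w j)) \<and> word_eval n gens (snd (w j)) = ginv n (yshift j)"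
    by (rule bchoice[THEN exE])
  then show ?thesis using that[of "\<lambda>j. fst (w j)" "\<lambda>j. snd (w j)"] unfolding yshift_words_def by blast
qed

definition shift_word :: "(nat \<Rightarrow> letter list) \<Rightarrow> (nat \<Rightarrow> letter list) \<Rightarrow> nat \<Rightarrow> nat \<Rightarrow> letter list \<Rightarrow> letter list" where
  "shift_word u ui M j w = concat (replicate M (ui j)) @ w @ concat (replicate M (u j))"

definition search_word ::
    "(nat \<Rightarrow> letter list) \<Rightarrow> (nat \<Rightarrow> letter list) \<Rightarrow> nat list \<Rightarrow> nat \<Rightarrow> nat \<Rightarrow> letter list \<Rightarrow> letter list" where
  "search_word u ui js M c w = power_word_inv ui js M c @ w @ power_word u js M c"

lemma word_eval_shift_word:
  assumes "yshift_words n gens u ui" "j \<in> {2..n}"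
  shows "word_eval n gens (shift_word u ui M j w) = conjugate n (word_eval n gens w) (yshift j ^^ M)"
proof -
  have "word_eval n gens (concat (replicate M (u j))) = yshift j ^^ M"
    "word_eval n gens (concat (replicate M (ui j))) = ginv n (yshift j ^^ M)"
    using assms by (simp_all add: yshift_words_def word_eval_replicate ginv_funpow yshift_SymX)
  then show ?thesis unfolding shift_word_def by (simp add: word_eval_conj)
qed

lemma valid_shift_word:
  "yshift_words n gens u ui \<Longrightarrow> j \<in> {2..n} \<Longrightarrow> valid_word gens (shift_word u ui M j w) \<longleftrightarrow> valid_word gens w"
  by (simp add: yshift_words_def shift_word_def valid_word_replicate)

lemma word_eval_search_word:
  assumes "yshift_words n gens u ui" "set js \<subseteq> {2..n}"
  shows "word_eval n gens (search_word u ui js M c w) = conjugate n (word_eval n gens w) (yshift_prod js M c)"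
proof -
  have "word_eval n gens (power_word u js M c) = yshift_prod js M c"
    using assms by (intro word_eval_power_word) (auto simp: yshift_words_def)
  moreover have "word_eval n gens (power_word_inv ui js M c) = ginv n (yshift_prod js M c)"
    using assms by (intro word_eval_power_word_inv) (auto simp: yshift_words_def)
  ultimately show ?thesis unfolding search_word_def by (simp add: word_eval_conj)
qed

lemma valid_search_word:
  "yshift_words n gens u ui \<Longrightarrow> set js \<subseteq> {2..n} \<Longrightarrow>
   valid_word gens (search_word u ui js M c w) \<longleftrightarrow> valid_word gens w"
  unfolding search_word_def yshift_words_def
  by (auto intro!: valid_power_word valid_power_word_inv)

text \<open>The premise conj_words n gens (Hstar n) w w holds exactly for the valid words w; it makes
  the search for m terminate on arbitrary codes.\<close>

definition shift_exponent :: "nat \<Rightarrow> perm list \<Rightarrow> (nat \<Rightarrow> letter list) \<Rightarrow> (nat \<Rightarrow> letter list) \<Rightarrow> letter list \<Rightarrow> nat" where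
  "shift_exponent n gens u ui w = (LEAST m. conj_words n gens (Hstar n) w w \<longrightarrow>
     (\<forall>j\<in>{2..n}. conj_words n gens (Hstar n) w (shift_word u ui (Suc m) j w)))"

lemma exists_shift_exponent:
  assumes gen: "generating_list n gens" and u: "yshift_words n gens u ui"
  shows "\<exists>m. conj_words n gens (Hstar n) w w \<longrightarrow>
    (\<forall>j\<in>{2..n}. conj_words n gens (Hstar n) w (shift_word u ui (Suc m) j w))"
proof (cases "valid_word gens w")
  case True
  let ?g = "word_eval n gens w"
  have "?g \<in> Gn n" using gen True word_eval_Gn unfolding generating_list_def by blast
  then obtain M where M: "0 < M" "\<And>j. j \<in> {2..n} \<Longrightarrow> yshift j ^^ M \<in> Hstar n ?g"
    using exists_yshift_power_in_Hstar by blast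
  then have "conj_words n gens (Hstar n) w (shift_word u ui (Suc (M - 1)) j w)" if "j \<in> {2..n}" for j
    using True u that unfolding conj_words_def conjugate_in_def
    by (auto simp: word_eval_shift_word valid_shift_word)
  then show ?thesis by blast
qed (simp add: conj_words_def)

lemma conj_words_Hn_iff_search:
  fixes w1 w2 :: "letter list"
  assumes n: "2 \<le> n" and gen: "generating_list n gens" and u: "yshift_words n gens u ui"
  defines "M \<equiv> Suc (shift_exponent n gens u ui w1)"
  shows "conj_words n gens (\<lambda>_. Hn n) w1 w2 \<longleftrightarrow>
    (\<exists>c < M ^ (n - 1). conj_words n gens (Hstar n) w1 (search_word u ui [2..<Suc n] M c w2))"
proof (cases "valid_word gens w1")
  case True
  let ?g = "word_eval n gens w1" and ?h = "word_eval n gens w2" and ?js = "[2..<Suc n]"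
  have js: "set ?js \<subseteq> {2..n}" by auto
  have "conj_words n gens (Hstar n) w1 w1 \<longrightarrow>
      (\<forall>j\<in>{2..n}. conj_words n gens (Hstar n) w1 (shift_word u ui M j w1))"
    unfolding M_def shift_exponent_def by (rule LeastI_ex[OF exists_shift_exponent[OF gen u]])
  then have shift_words: "\<forall>j\<in>{2..n}. conj_words n gens (Hstar n) w1 (shift_word u ui M j w1)"
    using True conj_words_Hstar_self by blast
  have shifts: "\<forall>j\<in>{2..n}. conjugate_in n (Hstar n ?g) ?g (conjugate n ?g (yshift j ^^ M))"
  proof
    fix j assume j: "j \<in> {2..n}"
    then show "conjugate_in n (Hstar n ?g) ?g (conjugate n ?g (yshift j ^^ M))"
      using bspec[OF shift_words j] unfolding conj_words_def word_eval_shift_word[OF u j] by blast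
  qed
  have "conjugate_in n (Hn n) ?g ?h \<longleftrightarrow>
      (\<exists>c < M ^ (n - 1). conjugate_in n (Hstar n ?g) ?g (conjugate n ?h (yshift_prod ?js M c)))"
  proof
    assume "conjugate_in n (Hn n) ?g ?h"
    then obtain z where z: "z \<in> Hn n" "conjugate n ?g z = ?h" unfolding conjugate_in_def by blast
    have "0 < M" by (simp add: M_def)
    from conjugate_Hn_imp_shifted_conjugate_Hstar[OF n this shifts z(1)]
    show "\<exists>c < M ^ (n - 1). conjugate_in n (Hstar n ?g) ?g (conjugate n ?h (yshift_prod ?js M c))"
      unfolding z(2) .
  next
    assume "\<exists>c < M ^ (n - 1). conjugate_in n (Hstar n ?g) ?g (conjugate n ?h (yshift_prod ?js M c))"
    then obtain c where "conjugate_in n (Hstar n ?g) ?g (conjugate n ?h (yshift_prod ?js M c))" by blast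
    moreover have "yshift_prod ?js M c \<in> Hn n" using js by (rule Hn_yshift_prod)
    ultimately show "conjugate_in n (Hn n) ?g ?h" by (intro conjugate_Hn_if_shifted_conjugate_Hstar)
  qed
  then show ?thesis
    unfolding conj_words_def word_eval_search_word[OF u js] valid_search_word[OF u js] using True by blast
qed (simp add: conj_words_def)

lemma computable_enc_shift_word:
  "computable (Suc (Suc 0)) (\<lambda>xs. enc_word (shift_word u ui (Suc (xs ! 0)) j (word_decode (xs ! 1))))"
  unfolding shift_word_def enc_word_append enc_word_word_decode
  by (intro computable_code_append computable_enc_word_replicate computable_Suc computable_nth0
      computable_nth1)

lemma computable_enc_search_word:
  "computable (Suc (Suc (Suc 0))) (\<lambda>xs. enc_word (search_word u ui js (Suc (xs ! 1)) (xs ! 0) (word_decode (xs ! 2))))"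
proof -
  have "computable (Suc (Suc (Suc 0)))
      (\<lambda>xs. (\<lambda>ys. enc_word (power_word u js (Suc (ys ! 1)) (ys ! 0))) [xs ! 0, xs ! 1])"
    "computable (Suc (Suc (Suc 0)))
      (\<lambda>xs. (\<lambda>ys. enc_word (power_word_inv ui js (Suc (ys ! 1)) (ys ! 0))) [xs ! 0, xs ! 1])"
    by (rule computable_comp2[OF computable_enc_power_word computable_nth0 computable_nth1]
        computable_comp2[OF computable_enc_power_word_inv computable_nth0 computable_nth1])+
  then have "computable (Suc (Suc (Suc 0))) (\<lambda>xs. enc_word (power_word u js (Suc (xs ! 1)) (xs ! 0)))"
    "computable (Suc (Suc (Suc 0))) (\<lambda>xs. enc_word (power_word_inv ui js (Suc (xs ! 1)) (xs ! 0)))"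
    by simp_all
  then show ?thesis unfolding search_word_def enc_word_append enc_word_word_decode
    by (intro computable_code_append computable_nth2)
qed

lemma computable_shift_exponent:
  assumes gen: "generating_list n gens" and u: "yshift_words n gens u ui"
    and A: "decidable_pred (Suc (Suc 0))
      (\<lambda>xs. conj_words n gens (Hstar n) (word_decode (xs ! 0)) (word_decode (xs ! 1)))"
  shows "computable (Suc 0) (\<lambda>xs. shift_exponent n gens u ui (word_decode (xs ! 0)))"
proof -
  let ?A = "\<lambda>p q. conj_words n gens (Hstar n) (word_decode p) (word_decode q)"
  have "decidable_pred (Suc (Suc 0)) (\<lambda>xs. ?A (xs ! 1) (xs ! 1))"
    using decidable_pred_comp2[OF A computable_nth1 computable_nth1] by simp
  moreover have "decidable_pred (Suc (Suc 0)) (\<lambda>xs. ?A (xs ! 1)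
      (enc_word (shift_word u ui (Suc (xs ! 0)) j (word_decode (xs ! 1)))))" for j
    using decidable_pred_comp2[OF A computable_nth1 computable_enc_shift_word] by simp
  ultimately have "decidable_pred (Suc (Suc 0)) (\<lambda>xs. ?A (xs ! 1) (xs ! 1) \<longrightarrow>
      (\<forall>j\<in>set [2..<Suc n]. ?A (xs ! 1) (enc_word (shift_word u ui (Suc (xs ! 0)) j (word_decode (xs ! 1))))))"
    by (intro decidable_pred_imp decidable_pred_list_all)
  then have "computable (Suc 0) (\<lambda>xs. LEAST m. ?A ((m # xs) ! 1) ((m # xs) ! 1) \<longrightarrow>
      (\<forall>j\<in>set [2..<Suc n]. ?A ((m # xs) ! 1)
         (enc_word (shift_word u ui (Suc ((m # xs) ! 0)) j (word_decode ((m # xs) ! 1))))))"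
    by (rule computable_Least_pred)
      (use exists_shift_exponent[OF gen u] in \<open>simp add: atLeastLessThanSuc_atLeastAtMost del: upt_Suc\<close>)
  then show ?thesis by (simp add: shift_exponent_def atLeastLessThanSuc_atLeastAtMost del: upt_Suc)
qed

lemma decidable_search:
  assumes A: "decidable_pred (Suc (Suc 0))
      (\<lambda>xs. conj_words n gens (Hstar n) (word_decode (xs ! 0)) (word_decode (xs ! 1)))"
    and E: "computable (Suc 0) (\<lambda>xs. E (xs ! 0))"
  shows "decidable_pred (Suc (Suc 0)) (\<lambda>xs. \<exists>c < Suc (E (xs ! 0)) ^ r.
      conj_words n gens (Hstar n) (word_decode (xs ! 0))
        (search_word u ui js (Suc (E (xs ! 0))) c (word_decode (xs ! 1))))"
proof -
  have "computable (Suc (Suc (Suc 0)))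
      (\<lambda>xs. enc_word (search_word u ui js (Suc (E (xs ! 1))) (xs ! 0) (word_decode (xs ! 2))))"
    using computable_comp3[OF computable_enc_search_word computable_nth0
        computable_comp1[OF E computable_nth1] computable_nth2] by simp
  from decidable_pred_comp2[OF A computable_nth1 this]
  have search: "decidable_pred (Suc (Suc (Suc 0))) (\<lambda>xs. conj_words n gens (Hstar n) (word_decode (xs ! 1))
      (search_word u ui js (Suc (E (xs ! 1))) (xs ! 0) (word_decode (xs ! 2))))"
    by simp
  have "computable (Suc (Suc 0)) (\<lambda>xs. Suc (E (xs ! 0)) ^ r)"
    using computable_comp1[OF E computable_nth0] by (simp add: computable_power computable_Suc computable_const)
  from decidable_pred_bounded_ex[OF search this] show ?thesis by simp
qed

lemma decidable_conj_words_Hn: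
  assumes n: "2 \<le> n" and gen: "generating_list n gens"
    and dec: "decidable_pairs (conj_words n gens (Hstar n))"
  shows "decidable_pairs (conj_words n gens (\<lambda>_. Hn n))"
proof -
  obtain u ui where u: "yshift_words n gens u ui" using exists_yshift_words[OF gen] .
  have A: "decidable_pred (Suc (Suc 0))
      (\<lambda>xs. conj_words n gens (Hstar n) (word_decode (xs ! 0)) (word_decode (xs ! 1)))"
    using dec decidable_pairs_iff by blast
  show ?thesis
    unfolding decidable_pairs_iff conj_words_Hn_iff_search[OF n gen u]
    by (rule decidable_search[OF A computable_shift_exponent[OF gen u A]])
qed

theorem lemma4p11:
  fixes n :: nat and gens :: "perm list"
  assumes "2 \<le> n"
    and "generating_list n gens"
    and "decidable_pairs (\<lambda>w1 w2. valid_word gens w1 \<and> valid_word gens w2 \<and>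
           (\<exists>x \<in> Hstar n (word_eval n gens w1).
              gmul (gmul (ginv n x) (word_eval n gens w1)) x = word_eval n gens w2))"
  shows "decidable_pairs (\<lambda>w1 w2. valid_word gens w1 \<and> valid_word gens w2 \<and>
           (\<exists>x \<in> Hn n.
              gmul (gmul (ginv n x) (word_eval n gens w1)) x = word_eval n gens w2))"
proof -
  have conj_words_eq: "(\<lambda>w1 w2. valid_word gens w1 \<and> valid_word gens w2 \<and>
      (\<exists>x \<in> X (word_eval n gens w1). gmul (gmul (ginv n x) (word_eval n gens w1)) x = word_eval n gens w2))
      = conj_words n gens X" for X
    by (simp add: fun_eq_iff conj_words_def conjugate_in_def conjugate_def)
  have "decidable_pairs (conj_words n gens (Hstar n))"
    using assms(3) unfolding conj_words_eq .
  then show ?thesis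
    using decidable_conj_words_Hn[OF assms(1,2)] conj_words_eq[of "\<lambda>_. Hn n"] by simp
qed

end
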